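(* Let $Q$ be a groupoid quantale with base locale $A$ and let $X$ be a principal $Q$-locale over a locale $M$. Then $X$ is a fully open principal $G$-bundle over $M$, where $G=\mathcal G(Q)$ is the open groupoid of $Q$ (with anchor $p$ given by $p^*(a)=a\triangleright1_X$, action $a_X$ with $a_X^*(x)=\bigvee_{q\cdot y\le x}q\otimes y$, and bundle map $\pi:X\to M$ the open surjection whose direct image is $\tilde\varsigma$).
   Context: Let $A$ be a locale. A groupoid quantale $Q$ (base locale $A$) is an involutive quantale which is an $A$-$A$-bimodule (actions $a\triangleright q$, $q\triangleleft a$) with $(a\triangleright x)y=a\triangleright(xy)$, $(x\triangleleft a)y=x(a\triangleright y)$, $(xy)\triangleleft a=x(y\triangleleft a)$, $(a\triangleright x\triangleleft b)^*=b\triangleright x^*\triangleleft a$; a frame with $(a\triangleright q)\wedge m=a\triangleright(q\wedge m)$, $m\wedge(q\triangleleft a)=(q\wedge m)\triangleleft a$; equipped with a sup-lattice homomorphism $\varsigma_Q:Q\to A$ with $\varsigma_Q(1_Q)=1_A$, $\varsigma_Q(x)\triangleright y\le xx^*y$, $\varsigma_Q(x)\triangleright x=x$, $\varsigma_Q(a\triangleright x)=a\wedge\varsigma_Q(x)$, and a frame homomorphism $\upsilon:Q\to A$ with $\upsilon(a\triangleright1_Q)=a=\upsilon(1_Q\triangleleft a)$; the right adjoint of $Q\otimes_AQ\to Q$ preserves joins; $\bigvee_{xy\le a}\upsilon(x)\triangleright y=a$, $\upsilon(a)\triangleright1_Q=\bigvee_{xx^*\le a}x$. Its open groupoid $G=\mathcal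 G(Q)$ has $\mathcal O(G_1)=Q$, $\mathcal O(G_0)=A$, $d^*(a)=a\triangleright1_Q$, $r^*(a)=1_Q\triangleleft a$, $d_!=\varsigma_Q$, $u^*=\upsilon$, with quantale $\mathcal O(G)=Q$. A $Q$-module is a locale $X$ with a left $Q$-action $q\cdot x$ and unital left $A$-module structure $a\triangleright x$ with $(a\triangleright q)\cdot x=a\triangleright(q\cdot x)$, $(q\triangleleft a)\cdot x=q\cdot(a\triangleright x)$, $a\triangleright(x\wedge y)=(a\triangleright x)\wedge y$. A pre-Hilbert $Q$-module has $\langle-,-\rangle:X\times X\to Q$ with $\langle q\cdot x,y\rangle=q\langle x,y\rangle$, $a\triangleright\langle x,1_X\rangle=\langle a\triangleright x,1_X\rangle$, $\langle\bigvee x_\alpha,y\rangle=\bigvee\langle x_\alpha,y\rangle$, $\langle x,y\rangle=\langle y,x\rangle^*$. A stably supported $Q$-module has in addition a monotone $\varsigma_X:X\to A$ with $\varsigma_X(1_X)=1_A$, $\varsigma_X(x)\triangleright1_X\le\langle x,x\rangle\cdot1_X$, $\varsigma_X(x)\triangleright x=x$, $\varsigma_X(q\cdot x)\le\varsigma_Q(q)$. With $Q\otimes_AX$ the quotient of $Q\otimes X$ by $(q\triangleleft a)\otimes x=q\otimes(a\triangleright x)$, a $Q$-locale is a stably supported $Q$-module such that $\alpha_*:X\to Q\otimes_AX$, $\alpha_*(x)=\bigvee_{q\cdot y\le x}q\otimes y$, preserves joins, and $\bigvee_{q\cdot y\le x}\upsilon(q)\triangleright y=x$ for all $x$. A principal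 $Q$-locale over a locale $M$ is a $Q$-locale $X$ such that (P1) $X$ is an open $M$-locale, i.e. there is an open map of locales $\pi:X\to M$, with direct image $\tilde\varsigma=\pi_!$ satisfying $\tilde\varsigma(1_X)=1_M$; (P2) $\tilde\varsigma(q\cdot x)=\tilde\varsigma(\varsigma_Q(q^* )\triangleright x)$ for all $q\in Q$, $x\in X$; (P3) the map $\varphi:X\otimes_MX\to Q\otimes_AX$, $\varphi(x\otimes y)=\bigvee_{q\cdot z\le x}q\otimes(z\wedge y)$, is a frame isomorphism. For an open groupoid $G$, a $G$-locale is a locale $X$ with anchor $p:X\to G_0$ and associative unital action $a:G_1\times_{G_0}X\to X$ with $p\circ a=r\circ\pi_1$. A principal $G$-bundle over $M$ is a $G$-locale with $\pi:X\to M$, $\pi\circ a=\pi\circ\pi_2$, $\langle a,\pi_2\rangle:G_1\times_{G_0}X\to X\times_MX$ an isomorphism and $\pi$ an open surjection; it is fully open if moreover $p$ is an open surjection. *)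

theory Defs
  imports Main
begin

text \<open>A frame (the frame of opens of a locale) is presented by a carrier set S inside an
  ambient complete lattice, with the induced order.  Joins and meets are computed inside S.
  For a locale given by a whole type we use S = UNIV.\<close>

definition c_is_lub :: "'a::complete_lattice set \<Rightarrow> 'a set \<Rightarrow> 'a \<Rightarrow> bool" where
  "c_is_lub S T x \<longleftrightarrow> x \<in> S \<and> (\<forall>t\<in>T. t \<le> x) \<and> (\<forall>y\<in>S. (\<forall>t\<in>T. t \<le> y) \<longrightarrow> x \<le> y)"

definition c_is_glb :: "'a::complete_lattice set \<Rightarrow> 'a set \<Rightarrow> 'a \<Rightarrow> bool" where
  "c_is_glb S T x \<longleftrightarrow> x \<in> S \<and> (\<forall>t\<in>T. x \<le> t) \<and> (\<forall>y\<in>S. (\<forall>t\<in>T. y \<le> t) \<longrightarrow> y \<le> x)"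

definition c_lub :: "'a::complete_lattice set \<Rightarrow> 'a set \<Rightarrow> 'a" where
  "c_lub S T = (THE x. c_is_lub S T x)"

definition c_glb :: "'a::complete_lattice set \<Rightarrow> 'a set \<Rightarrow> 'a" where
  "c_glb S T = (THE x. c_is_glb S T x)"

definition c_meet :: "'a::complete_lattice set \<Rightarrow> 'a \<Rightarrow> 'a \<Rightarrow> 'a" where
  "c_meet S x y = c_glb S {x, y}"

definition c_top :: "'a::complete_lattice set \<Rightarrow> 'a" where
  "c_top S = c_lub S S"

definition is_frame :: "'a::complete_lattice set \<Rightarrow> bool" where
  "is_frame S \<longleftrightarrow> (\<forall>T\<subseteq>S. \<exists>x. c_is_lub S T x) \<and>
     (\<forall>a\<in>S. \<forall>T\<subseteq>S. c_meet S a (c_lub S T) = c_lub S (c_meet S a ` T))"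

text \<open>Frame homomorphisms (inverse images of locale maps), from carrier S to carrier S'.\<close>

definition frame_hom :: "'a::complete_lattice set \<Rightarrow> 'b::complete_lattice set \<Rightarrow> ('a \<Rightarrow> 'b) \<Rightarrow> bool" where
  "frame_hom S S' h \<longleftrightarrow> (\<forall>x\<in>S. h x \<in> S') \<and> h (c_top S) = c_top S' \<and>
     (\<forall>x\<in>S. \<forall>y\<in>S. h (c_meet S x y) = c_meet S' (h x) (h y)) \<and>
     (\<forall>T\<subseteq>S. h (c_lub S T) = c_lub S' (h ` T))"

definition frame_iso :: "'a::complete_lattice set \<Rightarrow> 'b::complete_lattice set \<Rightarrow> ('a \<Rightarrow> 'b) \<Rightarrow> bool" where
  "frame_iso S S' h \<longleftrightarrow> frame_hom S S' h \<and> bij_betw h S S'"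

definition sup_hom :: "'a::complete_lattice set \<Rightarrow> 'b::complete_lattice set \<Rightarrow> ('a \<Rightarrow> 'b) \<Rightarrow> bool" where
  "sup_hom S S' h \<longleftrightarrow> (\<forall>x\<in>S. h x \<in> S') \<and> (\<forall>T\<subseteq>S. h (c_lub S T) = c_lub S' (h ` T))"

text \<open>A locale map f : X \<rightarrow> Y, given by its inverse image fi : O(Y) \<rightarrow> O(X), is open iff fi
  has a left adjoint (the direct image f_!) satisfying the Frobenius reciprocity condition.\<close>

definition open_dimage :: "'x::complete_lattice set \<Rightarrow> 'y::complete_lattice set \<Rightarrow> ('y \<Rightarrow> 'x) \<Rightarrow> ('x \<Rightarrow> 'y) \<Rightarrow> bool" where
  "open_dimage SX SY fi fs \<longleftrightarrow> frame_hom SY SX fi \<and> (\<forall>x\<in>SX. fs x \<in> SY) \<and>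
     (\<forall>x\<in>SX. \<forall>y\<in>SY. fs x \<le> y \<longleftrightarrow> x \<le> fi y) \<and>
     (\<forall>x\<in>SX. \<forall>y\<in>SY. fs (c_meet SX x (fi y)) = c_meet SY (fs x) y)"

definition open_map :: "'x::complete_lattice set \<Rightarrow> 'y::complete_lattice set \<Rightarrow> ('y \<Rightarrow> 'x) \<Rightarrow> bool" where
  "open_map SX SY fi \<longleftrightarrow> (\<exists>fs. open_dimage SX SY fi fs)"

text \<open>Open surjection: open map whose inverse image is injective (i.e. an epimorphism of locales).\<close>
definition open_surjection :: "'x::complete_lattice set \<Rightarrow> 'y::complete_lattice set \<Rightarrow> ('y \<Rightarrow> 'x) \<Rightarrow> bool" where
  "open_surjection SX SY fi \<longleftrightarrow> open_map SX SY fi \<and> inj_on fi SY"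

section \<open>Tensor products of sup-lattices over a base, as sets of C-ideals\<close>

definition cideal :: "'l::complete_lattice set \<Rightarrow> 'r::complete_lattice set \<Rightarrow> ('l \<times> 'r) set \<Rightarrow> bool" where
  "cideal L R D \<longleftrightarrow> D \<subseteq> L \<times> R \<and>
     (\<forall>l r l' r'. (l, r) \<in> D \<and> l' \<in> L \<and> r' \<in> R \<and> l' \<le> l \<and> r' \<le> r \<longrightarrow> (l', r') \<in> D) \<and>
     (\<forall>T r. T \<subseteq> L \<and> r \<in> R \<and> (\<forall>t\<in>T. (t, r) \<in> D) \<longrightarrow> (c_lub L T, r) \<in> D) \<and>
     (\<forall>l T. l \<in> L \<and> T \<subseteq> R \<and> (\<forall>t\<in>T. (l, t) \<in> D) \<longrightarrow> (l, c_lub R T) \<in> D)"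

text \<open>L \<otimes>_B R: the quotient of the sup-lattice tensor L \<otimes> R by the relations
  (fl b l) \<otimes> r = l \<otimes> (fr b r), for b \<in> B, presented as the set of C-ideals saturated
  with respect to these relations (ordered by inclusion).\<close>

definition tensor :: "'l::complete_lattice set \<Rightarrow> 'r::complete_lattice set \<Rightarrow>
    ('b \<Rightarrow> 'l \<Rightarrow> 'l) \<Rightarrow> ('b \<Rightarrow> 'r \<Rightarrow> 'r) \<Rightarrow> 'b set \<Rightarrow> ('l \<times> 'r) set set" where
  "tensor L R fl fr B = {D. cideal L R D \<and>
     (\<forall>b\<in>B. \<forall>l\<in>L. \<forall>r\<in>R. (fl b l, r) \<in> D \<longleftrightarrow> (l, fr b r) \<in> D)}"

text \<open>The generator l \<otimes> r of a tensor T.\<close>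
definition tel :: "('l \<times> 'r) set set \<Rightarrow> 'l \<Rightarrow> 'r \<Rightarrow> ('l \<times> 'r) set" where
  "tel T l r = c_glb T {D \<in> T. (l, r) \<in> D}"

text \<open>Frame pushout L \<otimes>_{O(B)} R of frame homomorphisms f : O(B) \<rightarrow> L and g : O(B) \<rightarrow> R,
  where O(B) is the whole type 'b; this is the frame of the fibred product of locales.\<close>
definition pushout :: "'l::complete_lattice set \<Rightarrow> 'r::complete_lattice set \<Rightarrow>
    ('b::complete_lattice \<Rightarrow> 'l) \<Rightarrow> ('b \<Rightarrow> 'r) \<Rightarrow> ('l \<times> 'r) set set" where
  "pushout L R f g = tensor L R (\<lambda>b l. c_meet L (f b) l) (\<lambda>b r. c_meet R (g b) r) UNIV"

text \<open>Inverse images of the two projections out of a fibred product with carriers L, R.\<close>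
definition inj1 :: "('l \<times> 'r) set set \<Rightarrow> 'l set \<Rightarrow> 'r::complete_lattice set \<Rightarrow> 'l \<Rightarrow> ('l \<times> 'r) set" where
  "inj1 T L R l = tel T l (c_top R)"

definition inj2 :: "('l \<times> 'r) set set \<Rightarrow> 'l::complete_lattice set \<Rightarrow> 'r set \<Rightarrow> 'r \<Rightarrow> ('l \<times> 'r) set" where
  "inj2 T L R r = tel T (c_top L) r"

text \<open>Inverse image of the pairing map induced by two maps into the factors:
  the unique frame map sending l \<otimes> r to f l \<and> g r.\<close>
definition copair :: "('l \<times> 'r) set set \<Rightarrow> 's::complete_lattice set \<Rightarrow> ('l \<Rightarrow> 's) \<Rightarrow> ('r \<Rightarrow> 's) \<Rightarrow>
    ('l \<times> 'r) set \<Rightarrow> 's" where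
  "copair T S f g D = c_lub S {c_meet S (f l) (g r) | l r. (l, r) \<in> D}"

definition sup_preserving :: "('a::complete_lattice \<Rightarrow> 'b::complete_lattice) \<Rightarrow> bool" where
  "sup_preserving f \<longleftrightarrow> (\<forall>S. f (Sup S) = Sup (f ` S))"

definition involutive_quantale :: "('q::complete_lattice \<Rightarrow> 'q \<Rightarrow> 'q) \<Rightarrow> ('q \<Rightarrow> 'q) \<Rightarrow> bool" where
  "involutive_quantale mul invo \<longleftrightarrow>
     (\<forall>x y z. mul (mul x y) z = mul x (mul y z)) \<and>
     (\<forall>x S. mul x (Sup S) = Sup (mul x ` S)) \<and>
     (\<forall>S y. mul (Sup S) y = Sup ((\<lambda>x. mul x y) ` S)) \<and>
     (\<forall>x. invo (invo x) = x) \<and> (\<forall>x y. invo (mul x y) = mul (invo y) (invo x)) \<and>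
     sup_preserving invo"

text \<open>Left module over the quantale (A, \<and>) of a locale A (not assumed unital).\<close>
definition left_A_module :: "('a::complete_lattice \<Rightarrow> 'm::complete_lattice \<Rightarrow> 'm) \<Rightarrow> bool" where
  "left_A_module act \<longleftrightarrow>
     (\<forall>a S. act a (Sup S) = Sup (act a ` S)) \<and>
     (\<forall>S m. act (Sup S) m = Sup ((\<lambda>a. act a m) ` S)) \<and>
     (\<forall>a b m. act (inf a b) m = act a (act b m))"

definition right_A_module :: "('m::complete_lattice \<Rightarrow> 'a::complete_lattice \<Rightarrow> 'm) \<Rightarrow> bool" where
  "right_A_module act \<longleftrightarrow>
     (\<forall>a S. act (Sup S) a = Sup ((\<lambda>m. act m a) ` S)) \<and>
     (\<forall>S m. act m (Sup S) = Sup (act m ` S)) \<and>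
     (\<forall>a b m. act m (inf a b) = act (act m a) b)"

text \<open>The frame Q \<otimes>_A Q (relations (x \<triangleleft> a) \<otimes> y = x \<otimes> (a \<triangleright> y)) and the multiplication map
  Q \<otimes>_A Q \<rightarrow> Q together with its right adjoint.\<close>
definition QQ_tensor :: "('a \<Rightarrow> 'q \<Rightarrow> 'q) \<Rightarrow> ('q \<Rightarrow> 'a \<Rightarrow> 'q) \<Rightarrow> ('q::complete_lattice \<times> 'q) set set" where
  "QQ_tensor lact ract = tensor UNIV UNIV (\<lambda>a x. ract x a) lact UNIV"

definition mult_map :: "('q::complete_lattice \<Rightarrow> 'q \<Rightarrow> 'q) \<Rightarrow> ('q \<times> 'q) set \<Rightarrow> 'q" where
  "mult_map mul D = Sup {mul x y | x y. (x, y) \<in> D}"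

definition mult_radj :: "('q::complete_lattice \<Rightarrow> 'q \<Rightarrow> 'q) \<Rightarrow> ('a \<Rightarrow> 'q \<Rightarrow> 'q) \<Rightarrow> ('q \<Rightarrow> 'a \<Rightarrow> 'q) \<Rightarrow>
    'q \<Rightarrow> ('q \<times> 'q) set" where
  "mult_radj mul lact ract q =
     c_lub (QQ_tensor lact ract) {D \<in> QQ_tensor lact ract. mult_map mul D \<le> q}"

definition groupoid_quantale ::
  "('q::complete_lattice \<Rightarrow> 'q \<Rightarrow> 'q) \<Rightarrow> ('q \<Rightarrow> 'q) \<Rightarrow> ('a::complete_lattice \<Rightarrow> 'q \<Rightarrow> 'q) \<Rightarrow>
   ('q \<Rightarrow> 'a \<Rightarrow> 'q) \<Rightarrow> ('q \<Rightarrow> 'a) \<Rightarrow> ('q \<Rightarrow> 'a) \<Rightarrow> bool" where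
  "groupoid_quantale mul invo lact ract sig ups \<longleftrightarrow>
     is_frame (UNIV :: 'a set) \<and>
     involutive_quantale mul invo \<and>
     left_A_module lact \<and> right_A_module ract \<and>
     (\<forall>a b x. ract (lact a x) b = lact a (ract x b)) \<and>
     (\<forall>a x y. mul (lact a x) y = lact a (mul x y)) \<and>
     (\<forall>a x y. mul (ract x a) y = mul x (lact a y)) \<and>
     (\<forall>a x y. ract (mul x y) a = mul x (ract y a)) \<and>
     (\<forall>a b x. invo (lact a (ract x b)) = lact b (ract (invo x) a)) \<and>
     is_frame (UNIV :: 'q set) \<and>
     (\<forall>a q m. inf (lact a q) m = lact a (inf q m)) \<and>
     (\<forall>a q m. inf m (ract q a) = ract (inf q m) a) \<and>
     sup_preserving sig \<and> sig top = top \<and>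
     (\<forall>x y. lact (sig x) y \<le> mul (mul x (invo x)) y) \<and>
     (\<forall>x. lact (sig x) x = x) \<and>
     (\<forall>a x. sig (lact a x) = inf a (sig x)) \<and>
     frame_hom UNIV UNIV ups \<and>
     (\<forall>a. ups (lact a top) = a \<and> ups (ract top a) = a) \<and>
     sup_hom UNIV (QQ_tensor lact ract) (mult_radj mul lact ract) \<and>
     (\<forall>q. Sup {lact (ups x) y | x y. mul x y \<le> q} = q) \<and>
     (\<forall>q. lact (ups q) top = Sup {x. mul x (invo x) \<le> q})"

text \<open>Q \<otimes>_A X (relations (q \<triangleleft> a) \<otimes> x = q \<otimes> (a \<triangleright> x)).\<close>
definition QX_tensor :: "('q::complete_lattice \<Rightarrow> 'a \<Rightarrow> 'q) \<Rightarrow> ('a \<Rightarrow> 'x::complete_lattice \<Rightarrow> 'x) \<Rightarrow>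
    ('q \<times> 'x) set set" where
  "QX_tensor ract xact = tensor UNIV UNIV (\<lambda>a q. ract q a) xact UNIV"

definition alpha_star :: "('q::complete_lattice \<Rightarrow> 'a \<Rightarrow> 'q) \<Rightarrow> ('a \<Rightarrow> 'x::complete_lattice \<Rightarrow> 'x) \<Rightarrow>
    ('q \<Rightarrow> 'x \<Rightarrow> 'x) \<Rightarrow> 'x \<Rightarrow> ('q \<times> 'x) set" where
  "alpha_star ract xact qact x =
     c_lub (QX_tensor ract xact) {tel (QX_tensor ract xact) q y | q y. qact q y \<le> x}"

definition Q_module ::
  "('q::complete_lattice \<Rightarrow> 'q \<Rightarrow> 'q) \<Rightarrow> ('a::complete_lattice \<Rightarrow> 'q \<Rightarrow> 'q) \<Rightarrow> ('q \<Rightarrow> 'a \<Rightarrow> 'q) \<Rightarrow>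
   ('q \<Rightarrow> 'x::complete_lattice \<Rightarrow> 'x) \<Rightarrow> ('a \<Rightarrow> 'x \<Rightarrow> 'x) \<Rightarrow> bool" where
  "Q_module mul lact ract qact xact \<longleftrightarrow>
     is_frame (UNIV :: 'x set) \<and>
     (\<forall>q S. qact q (Sup S) = Sup (qact q ` S)) \<and>
     (\<forall>S x. qact (Sup S) x = Sup ((\<lambda>q. qact q x) ` S)) \<and>
     (\<forall>p q x. qact (mul p q) x = qact p (qact q x)) \<and>
     left_A_module xact \<and> (\<forall>x. xact top x = x) \<and>
     (\<forall>a q x. qact (lact a q) x = xact a (qact q x)) \<and>
     (\<forall>a q x. qact (ract q a) x = qact q (xact a x)) \<and>
     (\<forall>a x y. xact a (inf x y) = inf (xact a x) y)"

definition pre_Hilbert ::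
  "('q::complete_lattice \<Rightarrow> 'q \<Rightarrow> 'q) \<Rightarrow> ('q \<Rightarrow> 'q) \<Rightarrow> ('a::complete_lattice \<Rightarrow> 'q \<Rightarrow> 'q) \<Rightarrow> ('q \<Rightarrow> 'a \<Rightarrow> 'q) \<Rightarrow>
   ('q \<Rightarrow> 'x::complete_lattice \<Rightarrow> 'x) \<Rightarrow> ('a \<Rightarrow> 'x \<Rightarrow> 'x) \<Rightarrow> ('x \<Rightarrow> 'x \<Rightarrow> 'q) \<Rightarrow> bool" where
  "pre_Hilbert mul invo lact ract qact xact ip \<longleftrightarrow>
     Q_module mul lact ract qact xact \<and>
     (\<forall>q x y. ip (qact q x) y = mul q (ip x y)) \<and>
     (\<forall>a x. lact a (ip x top) = ip (xact a x) top) \<and>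
     (\<forall>S y. ip (Sup S) y = Sup ((\<lambda>x. ip x y) ` S)) \<and>
     (\<forall>x y. ip x y = invo (ip y x))"

definition stably_supported ::
  "('q::complete_lattice \<Rightarrow> 'q \<Rightarrow> 'q) \<Rightarrow> ('q \<Rightarrow> 'q) \<Rightarrow> ('a::complete_lattice \<Rightarrow> 'q \<Rightarrow> 'q) \<Rightarrow> ('q \<Rightarrow> 'a \<Rightarrow> 'q) \<Rightarrow>
   ('q \<Rightarrow> 'a) \<Rightarrow> ('q \<Rightarrow> 'x::complete_lattice \<Rightarrow> 'x) \<Rightarrow> ('a \<Rightarrow> 'x \<Rightarrow> 'x) \<Rightarrow> ('x \<Rightarrow> 'x \<Rightarrow> 'q) \<Rightarrow>
   ('x \<Rightarrow> 'a) \<Rightarrow> bool" where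
  "stably_supported mul invo lact ract sigQ qact xact ip sigX \<longleftrightarrow>
     pre_Hilbert mul invo lact ract qact xact ip \<and>
     mono sigX \<and> sigX top = top \<and>
     (\<forall>x. xact (sigX x) top \<le> qact (ip x x) top) \<and>
     (\<forall>x. xact (sigX x) x = x) \<and>
     (\<forall>q x. sigX (qact q x) \<le> sigQ q)"

definition Q_locale ::
  "('q::complete_lattice \<Rightarrow> 'q \<Rightarrow> 'q) \<Rightarrow> ('q \<Rightarrow> 'q) \<Rightarrow> ('a::complete_lattice \<Rightarrow> 'q \<Rightarrow> 'q) \<Rightarrow> ('q \<Rightarrow> 'a \<Rightarrow> 'q) \<Rightarrow>
   ('q \<Rightarrow> 'a) \<Rightarrow> ('q \<Rightarrow> 'a) \<Rightarrow> ('q \<Rightarrow> 'x::complete_lattice \<Rightarrow> 'x) \<Rightarrow> ('a \<Rightarrow> 'x \<Rightarrow> 'x) \<Rightarrow>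
   ('x \<Rightarrow> 'x \<Rightarrow> 'q) \<Rightarrow> ('x \<Rightarrow> 'a) \<Rightarrow> bool" where
  "Q_locale mul invo lact ract sigQ ups qact xact ip sigX \<longleftrightarrow>
     stably_supported mul invo lact ract sigQ qact xact ip sigX \<and>
     sup_hom UNIV (QX_tensor ract xact) (alpha_star ract xact qact) \<and>
     (\<forall>x. Sup {xact (ups q) y | q y. qact q y \<le> x} = x)"

text \<open>X \<otimes>_M X for the locale map \<pi> : X \<rightarrow> M with inverse image piS.\<close>
definition XX_tensor :: "('m::complete_lattice \<Rightarrow> 'x::complete_lattice) \<Rightarrow> ('x \<times> 'x) set set" where
  "XX_tensor piS = pushout UNIV UNIV piS piS"

definition phi_map :: "('q::complete_lattice \<Rightarrow> 'a \<Rightarrow> 'q) \<Rightarrow> ('a \<Rightarrow> 'x::complete_lattice \<Rightarrow> 'x) \<Rightarrow>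
    ('q \<Rightarrow> 'x \<Rightarrow> 'x) \<Rightarrow> ('x \<times> 'x) set \<Rightarrow> ('q \<times> 'x) set" where
  "phi_map ract xact qact D =
     c_lub (QX_tensor ract xact)
       {tel (QX_tensor ract xact) q (inf z y) | q z x y. (x, y) \<in> D \<and> qact q z \<le> x}"

definition principal_Q_locale ::
  "('q::complete_lattice \<Rightarrow> 'q \<Rightarrow> 'q) \<Rightarrow> ('q \<Rightarrow> 'q) \<Rightarrow> ('a::complete_lattice \<Rightarrow> 'q \<Rightarrow> 'q) \<Rightarrow> ('q \<Rightarrow> 'a \<Rightarrow> 'q) \<Rightarrow>
   ('q \<Rightarrow> 'a) \<Rightarrow> ('q \<Rightarrow> 'a) \<Rightarrow> ('q \<Rightarrow> 'x::complete_lattice \<Rightarrow> 'x) \<Rightarrow> ('a \<Rightarrow> 'x \<Rightarrow> 'x) \<Rightarrow>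
   ('x \<Rightarrow> 'x \<Rightarrow> 'q) \<Rightarrow> ('x \<Rightarrow> 'a) \<Rightarrow> ('m::complete_lattice \<Rightarrow> 'x) \<Rightarrow> ('x \<Rightarrow> 'm) \<Rightarrow> bool" where
  "principal_Q_locale mul invo lact ract sigQ ups qact xact ip sigX piS sigt \<longleftrightarrow>
     Q_locale mul invo lact ract sigQ ups qact xact ip sigX \<and>
     is_frame (UNIV :: 'm set) \<and>
     open_dimage UNIV UNIV piS sigt \<and> sigt top = top \<and>
     (\<forall>q x. sigt (qact q x) = sigt (xact (sigQ (invo q)) x)) \<and>
     frame_iso (XX_tensor piS) (QX_tensor ract xact) (phi_map ract xact qact)"

text \<open>The (open) groupoid G is given by its frames O(G_0) = 'a (whole type), O(G_1) = 'q
  (whole type) and the inverse images dS, rS : O(G_0) \<rightarrow> O(G_1), uS : O(G_1) \<rightarrow> O(G_0),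
  mS : O(G_1) \<rightarrow> O(G_2) of domain, range, unit and multiplication.  Convention (the one
  of the quantale Q = O(G)): G_2 = G_1 \<times>_{G_0} G_1 is the pullback of r and d,
  and for a G-locale X with anchor p, G_1 \<times>_{G_0} X is the pullback of r and p.\<close>

definition G2_frame :: "('a::complete_lattice \<Rightarrow> 'q::complete_lattice) \<Rightarrow> ('a \<Rightarrow> 'q) \<Rightarrow> ('q \<times> 'q) set set" where
  "G2_frame dS rS = pushout UNIV UNIV rS dS"

definition G1X_frame :: "('a::complete_lattice \<Rightarrow> 'q::complete_lattice) \<Rightarrow> ('a \<Rightarrow> 'x::complete_lattice) \<Rightarrow>
    ('q \<times> 'x) set set" where
  "G1X_frame rS pS = pushout UNIV UNIV rS pS"

text \<open>G_2 \<times>_{G_0} X: triples (g, h, x) with r(h) = p(x).\<close>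
definition G2X_frame :: "('a::complete_lattice \<Rightarrow> 'q::complete_lattice) \<Rightarrow> ('a \<Rightarrow> 'q) \<Rightarrow>
    ('a \<Rightarrow> 'x::complete_lattice) \<Rightarrow> (('q \<times> 'q) set \<times> 'x) set set" where
  "G2X_frame dS rS pS =
     pushout (G2_frame dS rS) UNIV (\<lambda>a. inj2 (G2_frame dS rS) UNIV UNIV (rS a)) pS"

definition G_locale ::
  "('a::complete_lattice \<Rightarrow> 'q::complete_lattice) \<Rightarrow> ('a \<Rightarrow> 'q) \<Rightarrow> ('q \<Rightarrow> 'a) \<Rightarrow> ('q \<Rightarrow> ('q \<times> 'q) set) \<Rightarrow>
   ('a \<Rightarrow> 'x::complete_lattice) \<Rightarrow> ('x \<Rightarrow> ('q \<times> 'x) set) \<Rightarrow> bool" where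
  "G_locale dS rS uS mS pS actS \<longleftrightarrow>
     (let G1X = G1X_frame rS pS; G2 = G2_frame dS rS; G2X = G2X_frame dS rS pS;
          \<pi>23 = copair G1X G2X (\<lambda>q. inj1 G2X G2 UNIV (inj2 G2 UNIV UNIV q)) (inj2 G2X G2 UNIV);
          m_id = copair G1X G2X (\<lambda>q. inj1 G2X G2 UNIV (mS q)) (inj2 G2X G2 UNIV);
          id_a = copair G1X G2X (\<lambda>q. inj1 G2X G2 UNIV (inj1 G2 UNIV UNIV q)) (\<lambda>x. \<pi>23 (actS x));
          up_id = copair G1X UNIV (\<lambda>q. pS (uS q)) id
      in is_frame (UNIV :: 'x set) \<and>
         frame_hom UNIV UNIV pS \<and>
         frame_hom UNIV G1X actS \<and>
         (\<forall>b. actS (pS b) = inj1 G1X UNIV UNIV (dS b)) \<and>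
         (\<forall>x. m_id (actS x) = id_a (actS x)) \<and>
         (\<forall>x. up_id (actS x) = x))"

definition fully_open_principal_G_bundle ::
  "('a::complete_lattice \<Rightarrow> 'q::complete_lattice) \<Rightarrow> ('a \<Rightarrow> 'q) \<Rightarrow> ('q \<Rightarrow> 'a) \<Rightarrow> ('q \<Rightarrow> ('q \<times> 'q) set) \<Rightarrow>
   ('a \<Rightarrow> 'x::complete_lattice) \<Rightarrow> ('x \<Rightarrow> ('q \<times> 'x) set) \<Rightarrow> ('m::complete_lattice \<Rightarrow> 'x) \<Rightarrow> bool" where
  "fully_open_principal_G_bundle dS rS uS mS pS actS piS \<longleftrightarrow>
     (let G1X = G1X_frame rS pS; XMX = pushout UNIV UNIV piS piS
      in G_locale dS rS uS mS pS actS \<and>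
         is_frame (UNIV :: 'm set) \<and>
         frame_hom UNIV UNIV piS \<and>
         (\<forall>m. actS (piS m) = inj2 G1X UNIV UNIV (piS m)) \<and>
         frame_iso XMX G1X (copair XMX G1X actS (inj2 G1X UNIV UNIV)) \<and>
         open_surjection UNIV UNIV piS \<and>
         open_surjection UNIV UNIV pS)"

end

theory Submission
  imports Defs
begin

(* All structure maps of the bundle are computed pointwise.  Elements of the tensor frames
   Q \<otimes>\<^sub>A X, Q \<otimes>\<^sub>A Q and (Q \<otimes>\<^sub>A Q) \<otimes>\<^sub>A X are saturated down-closed sets of generators, and
   in this picture \<alpha>\<^sub>*(x) = {(q, y) | q\<cdot>y \<le> x} while the right adjoint of multiplication sends q
   to {(p, p') | p p' \<le> q}.  The anchor p is open with direct image \<sigma>\<^sub>X and \<pi> is open by (P1);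
   both are surjective because their direct images preserve the top element.  Compatibility of
   \<alpha>\<^sub>* with p rests on q \<triangleleft> \<sigma>(y) \<le> q\<langle>y,y\<rangle>\<langle>y,y\<rangle>, compatibility with \<pi> on (P2), and the map
   G\<^sub>1 \<times>\<^sub>G\<^sub>0 X \<rightarrow> X \<times>\<^sub>M X is an isomorphism because its inverse image is \<phi> of (P3).  Both sides of
   the associativity law send x to the element generated by all q\<^sub>1 \<otimes> q\<^sub>2 \<otimes> w with
   q\<^sub>1\<cdot>(q\<^sub>2\<cdot>w) \<le> x, and the unit law is the axiom \<Or>{\<upsilon>(q) \<triangleright> y | q\<cdot>y \<le> x} = x. *)

section \<open>Frames as whole types\<close>

lemma c_is_lub_UNIV: "c_is_lub UNIV T x \<longleftrightarrow> x = Sup T"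
  unfolding c_is_lub_def by (auto intro: Sup_least Sup_upper antisym)

lemma c_lub_UNIV [simp]: "c_lub UNIV T = Sup T"
  unfolding c_lub_def c_is_lub_UNIV by simp

lemma c_is_glb_UNIV: "c_is_glb UNIV T x \<longleftrightarrow> x = Inf T"
  unfolding c_is_glb_def by (auto intro: Inf_greatest Inf_lower antisym)

lemma c_glb_UNIV [simp]: "c_glb UNIV T = Inf T"
  unfolding c_glb_def c_is_glb_UNIV by simp

lemma c_meet_UNIV [simp]: "c_meet UNIV x y = inf x y"
  unfolding c_meet_def by simp

lemma c_top_UNIV [simp]: "c_top UNIV = top"
  unfolding c_top_def by simp

lemma c_lub_eqI: "c_is_lub S T x \<Longrightarrow> c_lub S T = x"
  unfolding c_lub_def by (rule the_equality) (meson c_is_lub_def order.antisym)+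

lemma c_glb_eqI: "c_is_glb S T x \<Longrightarrow> c_glb S T = x"
  unfolding c_glb_def by (rule the_equality) (meson c_is_glb_def order.antisym)+

lemma is_frame_UNIV_iff:
  "is_frame (UNIV :: 'a::complete_lattice set) \<longleftrightarrow> (\<forall>(a::'a) T. inf a (Sup T) = Sup (inf a ` T))"
  unfolding is_frame_def c_is_lub_UNIV by simp

lemma frame_hom_UNIV_iff:
  "frame_hom UNIV UNIV h \<longleftrightarrow>
     h top = top \<and> (\<forall>x y. h (inf x y) = inf (h x) (h y)) \<and> (\<forall>T. h (Sup T) = Sup (h ` T))"
  unfolding frame_hom_def by simp

lemma open_dimage_UNIV_iff:
  "open_dimage UNIV UNIV fi fs \<longleftrightarrow>
     frame_hom UNIV UNIV fi \<and> (\<forall>x y. fs x \<le> y \<longleftrightarrow> x \<le> fi y) \<and>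
     (\<forall>x y. fs (inf x (fi y)) = inf (fs x) y)"
  unfolding open_dimage_def by simp

text \<open>Frobenius reciprocity at the top element makes the inverse image injective.\<close>

lemma open_surjection_if_open_dimage:
  assumes "open_dimage UNIV UNIV fi fs" and "fs top = top"
  shows "open_surjection UNIV UNIV fi"
proof -
  have "fs (fi y) = y" for y
    using assms unfolding open_dimage_UNIV_iff by (metis inf_top_left)
  then have "inj fi"
    by (metis injI)
  with assms(1) show ?thesis
    unfolding open_surjection_def open_map_def by blast
qed

lemma mono_if_Sup_preserving:
  fixes f :: "'a::complete_lattice \<Rightarrow> 'b::complete_lattice"
  assumes "\<And>S. f (Sup S) = Sup (f ` S)"
  shows "mono f"
proof
  fix a b :: 'a assume "a \<le> b"
  then have "f b = sup (f a) (f b)"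
    using assms[of "{a, b}"] by (simp add: sup_absorb2)
  then show "f a \<le> f b"
    by (metis sup.cobounded1)
qed

lemma mono2_if_Sup_preserving:
  fixes f :: "'a::complete_lattice \<Rightarrow> 'b::complete_lattice \<Rightarrow> 'c::complete_lattice"
  assumes "\<And>x S. f x (Sup S) = Sup (f x ` S)" and "\<And>y S. f (Sup S) y = Sup ((\<lambda>x. f x y) ` S)"
    and "x \<le> x'" and "y \<le> y'"
  shows "f x y \<le> f x' y'"
proof -
  have "f x y \<le> f x y'"
    using mono_if_Sup_preserving[of "f x"] assms(1,4) by (simp add: mono_def)
  also have "\<dots> \<le> f x' y'"
    using mono_if_Sup_preserving[of "\<lambda>x. f x y'"] assms(2,3) by (simp add: mono_def)
  finally show ?thesis .
qed

section \<open>Closure systems and tensors\<close>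

locale closure_system =
  fixes F :: "('l \<times> 'r) set set" and U :: "('l \<times> 'r) set"
  assumes top_mem: "U \<in> F"
    and mem_subset: "D \<in> F \<Longrightarrow> D \<subseteq> U"
    and Inter_mem: "G \<subseteq> F \<Longrightarrow> G \<noteq> {} \<Longrightarrow> \<Inter>G \<in> F"
begin

lemma is_lub:
  assumes "S \<subseteq> F"
  shows "c_is_lub F S (\<Inter>{D\<in>F. \<Union>S \<subseteq> D})"
proof -
  have "U \<in> {D\<in>F. \<Union>S \<subseteq> D}"
    using assms top_mem mem_subset by blast
  then have "\<Inter>{D\<in>F. \<Union>S \<subseteq> D} \<in> F"
    by (intro Inter_mem) auto
  then show ?thesis
    unfolding c_is_lub_def by (auto intro: Inter_lower)
qed

lemma lub_eq: "S \<subseteq> F \<Longrightarrow> c_lub F S = \<Inter>{D\<in>F. \<Union>S \<subseteq> D}"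
  using is_lub by (rule c_lub_eqI)

lemma lub_mem: "S \<subseteq> F \<Longrightarrow> c_lub F S \<in> F"
  using is_lub lub_eq by (simp add: c_is_lub_def)

lemma lub_upper: "S \<subseteq> F \<Longrightarrow> s \<in> S \<Longrightarrow> s \<subseteq> c_lub F S"
  by (auto simp: lub_eq)

lemma lub_least: "S \<subseteq> F \<Longrightarrow> D \<in> F \<Longrightarrow> (\<And>s. s \<in> S \<Longrightarrow> s \<subseteq> D) \<Longrightarrow> c_lub F S \<subseteq> D"
  by (simp add: lub_eq Inter_lower Sup_least)

lemma lub_antisym:
  assumes "S1 \<subseteq> F" "S2 \<subseteq> F"
    and "\<And>s. s \<in> S1 \<Longrightarrow> s \<subseteq> c_lub F S2" "\<And>s. s \<in> S2 \<Longrightarrow> s \<subseteq> c_lub F S1"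
  shows "c_lub F S1 = c_lub F S2"
  using assms by (meson lub_least lub_mem subset_antisym)

lemma Int_Inter_mem: "G \<subseteq> F \<Longrightarrow> U \<inter> \<Inter>G \<in> F"
  using top_mem Inter_mem[of "insert U G"] by auto

lemma glb_eq: "S \<subseteq> F \<Longrightarrow> c_glb F S = U \<inter> \<Inter>S"
  by (intro c_glb_eqI) (use Int_Inter_mem mem_subset in \<open>auto simp: c_is_glb_def\<close>)

lemma top_eq: "c_top F = U"
  unfolding c_top_def using top_mem mem_subset by (subst lub_eq) auto

lemma Int_mem: "A \<in> F \<Longrightarrow> B \<in> F \<Longrightarrow> A \<inter> B \<in> F"
  using Inter_mem[of "{A, B}"] by simp

lemma meet_eq: "A \<in> F \<Longrightarrow> B \<in> F \<Longrightarrow> c_meet F A B = A \<inter> B"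
  unfolding c_meet_def using mem_subset by (subst glb_eq) auto

lemma tel_eq: "tel F l r = U \<inter> \<Inter>{D\<in>F. (l, r) \<in> D}"
  unfolding tel_def by (subst glb_eq) auto

lemma tel_mem: "tel F l r \<in> F"
  unfolding tel_eq by (rule Int_Inter_mem) blast

lemma tel_in: "(l, r) \<in> U \<Longrightarrow> (l, r) \<in> tel F l r"
  by (simp add: tel_eq)

lemma tel_least: "D \<in> F \<Longrightarrow> (l, r) \<in> D \<Longrightarrow> tel F l r \<subseteq> D"
  by (auto simp: tel_eq)

lemma lub_tels:
  assumes "D \<in> F"
  shows "c_lub F {tel F l r | l r. (l, r) \<in> D} = D"
proof (rule subset_antisym)
  have S: "{tel F l r | l r. (l, r) \<in> D} \<subseteq> F"
    using tel_mem by blast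
  show "c_lub F {tel F l r | l r. (l, r) \<in> D} \<subseteq> D"
    using tel_least[OF assms] by (intro lub_least[OF S assms]) blast
  have "p \<in> tel F l r \<Longrightarrow> (l, r) \<in> D \<Longrightarrow> p \<in> c_lub F {tel F l r | l r. (l, r) \<in> D}" for p l r
    using S by (auto intro: lub_upper[THEN subsetD])
  then show "D \<subseteq> c_lub F {tel F l r | l r. (l, r) \<in> D}"
    using assms mem_subset tel_in by fastforce
qed

end

lemma tensorD:
  assumes "D \<in> tensor L R fl fr B"
  shows tensorD_subset: "D \<subseteq> L \<times> R"
    and tensorD_down: "\<And>l r l' r'. (l, r) \<in> D \<Longrightarrow> l' \<in> L \<Longrightarrow> r' \<in> R \<Longrightarrow> l' \<le> l \<Longrightarrow> r' \<le> r \<Longrightarrow> (l', r') \<in> D"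
    and tensorD_lub_left: "\<And>S r. S \<subseteq> L \<Longrightarrow> r \<in> R \<Longrightarrow> (\<And>t. t \<in> S \<Longrightarrow> (t, r) \<in> D) \<Longrightarrow> (c_lub L S, r) \<in> D"
    and tensorD_lub_right: "\<And>l S. l \<in> L \<Longrightarrow> S \<subseteq> R \<Longrightarrow> (\<And>t. t \<in> S \<Longrightarrow> (l, t) \<in> D) \<Longrightarrow> (l, c_lub R S) \<in> D"
    and tensorD_sat: "\<And>b l r. b \<in> B \<Longrightarrow> l \<in> L \<Longrightarrow> r \<in> R \<Longrightarrow> (fl b l, r) \<in> D \<longleftrightarrow> (l, fr b r) \<in> D"
proof -
  have D: "cideal L R D" and sat: "\<forall>b\<in>B. \<forall>l\<in>L. \<forall>r\<in>R. (fl b l, r) \<in> D \<longleftrightarrow> (l, fr b r) \<in> D"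
    using assms unfolding tensor_def by auto
  note D = D[unfolded cideal_def]
  show "D \<subseteq> L \<times> R"
    using D by simp
  show "\<And>l r l' r'. (l, r) \<in> D \<Longrightarrow> l' \<in> L \<Longrightarrow> r' \<in> R \<Longrightarrow> l' \<le> l \<Longrightarrow> r' \<le> r \<Longrightarrow> (l', r') \<in> D"
    using D by metis
  show "\<And>S r. S \<subseteq> L \<Longrightarrow> r \<in> R \<Longrightarrow> (\<And>t. t \<in> S \<Longrightarrow> (t, r) \<in> D) \<Longrightarrow> (c_lub L S, r) \<in> D"
    using D by metis
  show "\<And>l S. l \<in> L \<Longrightarrow> S \<subseteq> R \<Longrightarrow> (\<And>t. t \<in> S \<Longrightarrow> (l, t) \<in> D) \<Longrightarrow> (l, c_lub R S) \<in> D"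
    using D by metis
  show "\<And>b l r. b \<in> B \<Longrightarrow> l \<in> L \<Longrightarrow> r \<in> R \<Longrightarrow> (fl b l, r) \<in> D \<longleftrightarrow> (l, fr b r) \<in> D"
    using sat by blast
qed

lemma tensorI:
  assumes "D \<subseteq> L \<times> R"
    and "\<And>l r l' r'. (l, r) \<in> D \<Longrightarrow> l' \<in> L \<Longrightarrow> r' \<in> R \<Longrightarrow> l' \<le> l \<Longrightarrow> r' \<le> r \<Longrightarrow> (l', r') \<in> D"
    and "\<And>S r. S \<subseteq> L \<Longrightarrow> r \<in> R \<Longrightarrow> (\<And>t. t \<in> S \<Longrightarrow> (t, r) \<in> D) \<Longrightarrow> (c_lub L S, r) \<in> D"
    and "\<And>l S. l \<in> L \<Longrightarrow> S \<subseteq> R \<Longrightarrow> (\<And>t. t \<in> S \<Longrightarrow> (l, t) \<in> D) \<Longrightarrow> (l, c_lub R S) \<in> D"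
    and "\<And>b l r. b \<in> B \<Longrightarrow> l \<in> L \<Longrightarrow> r \<in> R \<Longrightarrow> (fl b l, r) \<in> D \<longleftrightarrow> (l, fr b r) \<in> D"
  shows "D \<in> tensor L R fl fr B"
  unfolding tensor_def cideal_def
proof (intro CollectI conjI allI impI ballI)
  fix l r l' r' assume "(l, r) \<in> D \<and> l' \<in> L \<and> r' \<in> R \<and> l' \<le> l \<and> r' \<le> r"
  then show "(l', r') \<in> D"
    using assms(2) by blast
next
  fix S r assume "S \<subseteq> L \<and> r \<in> R \<and> (\<forall>t\<in>S. (t, r) \<in> D)"
  then show "(c_lub L S, r) \<in> D"
    using assms(3) by blast
next
  fix l S assume "l \<in> L \<and> S \<subseteq> R \<and> (\<forall>t\<in>S. (l, t) \<in> D)"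
  then show "(l, c_lub R S) \<in> D"
    using assms(4) by blast
qed (use assms(1,5) in blast)+

lemma tensor_cong:
  assumes "\<And>b l. b \<in> B \<Longrightarrow> l \<in> L \<Longrightarrow> fl b l = fl' b l" and "\<And>b r. b \<in> B \<Longrightarrow> r \<in> R \<Longrightarrow> fr b r = fr' b r"
  shows "tensor L R fl fr B = tensor L R fl' fr' B"
  unfolding tensor_def using assms by auto

lemma tensor_closure_system:
  assumes "\<And>S. S \<subseteq> L \<Longrightarrow> c_lub L S \<in> L" and "\<And>S. S \<subseteq> R \<Longrightarrow> c_lub R S \<in> R"
    and "\<And>b l. b \<in> B \<Longrightarrow> l \<in> L \<Longrightarrow> fl b l \<in> L" and "\<And>b r. b \<in> B \<Longrightarrow> r \<in> R \<Longrightarrow> fr b r \<in> R"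
  shows "closure_system (tensor L R fl fr B) (L \<times> R)"
proof
  show "L \<times> R \<in> tensor L R fl fr B"
    using assms by (intro tensorI) auto
  show "D \<subseteq> L \<times> R" if "D \<in> tensor L R fl fr B" for D
    using that by (rule tensorD_subset)
  fix G assume G: "G \<subseteq> tensor L R fl fr B" "G \<noteq> {}"
  note D = tensorD[OF G(1)[THEN subsetD]]
  show "\<Inter>G \<in> tensor L R fl fr B"
  proof (rule tensorI)
    show "\<Inter>G \<subseteq> L \<times> R"
      using G D(1) by blast
  next
    fix l r l' r' assume "(l, r) \<in> \<Inter>G" "l' \<in> L" "r' \<in> R" "l' \<le> l" "r' \<le> r"
    then show "(l', r') \<in> \<Inter>G"
      using D(2) by blast
  next
    fix S r assume "S \<subseteq> L" "r \<in> R" "\<And>t. t \<in> S \<Longrightarrow> (t, r) \<in> \<Inter>G"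
    then show "(c_lub L S, r) \<in> \<Inter>G"
      using D(3) by blast
  next
    fix l S assume "l \<in> L" "S \<subseteq> R" "\<And>t. t \<in> S \<Longrightarrow> (l, t) \<in> \<Inter>G"
    then show "(l, c_lub R S) \<in> \<Inter>G"
      using D(4) by blast
  next
    fix b l r assume "b \<in> B" "l \<in> L" "r \<in> R"
    then show "(fl b l, r) \<in> \<Inter>G \<longleftrightarrow> (l, fr b r) \<in> \<Inter>G"
      using D(5) by blast
  qed
qed

locale sup_tensor =
  fixes fl :: "'b \<Rightarrow> 'l::complete_lattice \<Rightarrow> 'l" and fr :: "'b \<Rightarrow> 'r::complete_lattice \<Rightarrow> 'r"
    and B :: "'b set"
begin

sublocale closure_system "tensor UNIV UNIV fl fr B" UNIV
  using tensor_closure_system[of UNIV UNIV B fl fr] by simp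

lemma memI:
  assumes "\<And>l r l' r'. (l, r) \<in> D \<Longrightarrow> l' \<le> l \<Longrightarrow> r' \<le> r \<Longrightarrow> (l', r') \<in> D"
    and "\<And>S r. (\<And>t. t \<in> S \<Longrightarrow> (t, r) \<in> D) \<Longrightarrow> (Sup S, r) \<in> D"
    and "\<And>l S. (\<And>t. t \<in> S \<Longrightarrow> (l, t) \<in> D) \<Longrightarrow> (l, Sup S) \<in> D"
    and "\<And>b l r. b \<in> B \<Longrightarrow> (fl b l, r) \<in> D \<longleftrightarrow> (l, fr b r) \<in> D"
  shows "D \<in> tensor UNIV UNIV fl fr B"
  using assms by (intro tensorI) auto

lemma mem_down: "D \<in> tensor UNIV UNIV fl fr B \<Longrightarrow> (l, r) \<in> D \<Longrightarrow> l' \<le> l \<Longrightarrow> r' \<le> r \<Longrightarrow> (l', r') \<in> D"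
  using tensorD_down by blast

lemma mem_Sup_left: "D \<in> tensor UNIV UNIV fl fr B \<Longrightarrow> (\<And>t. t \<in> S \<Longrightarrow> (t, r) \<in> D) \<Longrightarrow> (Sup S, r) \<in> D"
  using tensorD_lub_left[of D UNIV UNIV fl fr B S r] by simp

lemma mem_Sup_right: "D \<in> tensor UNIV UNIV fl fr B \<Longrightarrow> (\<And>t. t \<in> S \<Longrightarrow> (l, t) \<in> D) \<Longrightarrow> (l, Sup S) \<in> D"
  using tensorD_lub_right[of D UNIV UNIV fl fr B l S] by simp

lemma mem_sat: "D \<in> tensor UNIV UNIV fl fr B \<Longrightarrow> b \<in> B \<Longrightarrow> (fl b l, r) \<in> D \<longleftrightarrow> (l, fr b r) \<in> D"
  using tensorD_sat[of D UNIV UNIV fl fr B b l r] by simp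

lemma tel_self: "(l, r) \<in> tel (tensor UNIV UNIV fl fr B) l r"
  by (simp add: tel_in)

end

locale frame_tensor = sup_tensor fl fr B
  for fl :: "'b \<Rightarrow> 'l::complete_lattice \<Rightarrow> 'l" and fr :: "'b \<Rightarrow> 'r::complete_lattice \<Rightarrow> 'r"
    and B :: "'b set" +
  assumes inf_Sup_left: "\<And>(a::'l) S. inf a (Sup S) = Sup (inf a ` S)"
    and inf_Sup_right: "\<And>(c::'r) S. inf c (Sup S) = Sup (inf c ` S)"
    and fl_inf: "\<And>b s p. b \<in> B \<Longrightarrow> fl b (inf s p) = inf (fl b s) p"
    and fr_inf: "\<And>b s p. b \<in> B \<Longrightarrow> fr b (inf s p) = inf (fr b s) p"
begin

lemma meet_preimage_mem:
  assumes E: "E \<in> tensor UNIV UNIV fl fr B"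
  shows "{(r1, r2). \<forall>(q1, q2)\<in>C. (inf q1 r1, inf q2 r2) \<in> E} \<in> tensor UNIV UNIV fl fr B"
proof (rule memI)
  fix l r l' r'
  assume lr: "(l, r) \<in> {(r1, r2). \<forall>(q1, q2)\<in>C. (inf q1 r1, inf q2 r2) \<in> E}" "l' \<le> l" "r' \<le> r"
  show "(l', r') \<in> {(r1, r2). \<forall>(q1, q2)\<in>C. (inf q1 r1, inf q2 r2) \<in> E}"
  proof clarify
    fix q1 q2 assume "(q1, q2) \<in> C"
    then have "(inf q1 l, inf q2 r) \<in> E"
      using lr(1) by blast
    then show "(inf q1 l', inf q2 r') \<in> E"
      using mem_down[OF E] lr(2,3) by (meson inf_mono order_refl)
  qed
next
  fix S r assume S: "\<And>t. t \<in> S \<Longrightarrow> (t, r) \<in> {(r1, r2). \<forall>(q1, q2)\<in>C. (inf q1 r1, inf q2 r2) \<in> E}"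
  show "(Sup S, r) \<in> {(r1, r2). \<forall>(q1, q2)\<in>C. (inf q1 r1, inf q2 r2) \<in> E}"
  proof clarify
    fix q1 q2 assume "(q1, q2) \<in> C"
    then have "(Sup (inf q1 ` S), inf q2 r) \<in> E"
      using S by (intro mem_Sup_left[OF E]) auto
    then show "(inf q1 (Sup S), inf q2 r) \<in> E"
      by (simp add: inf_Sup_left)
  qed
next
  fix l S assume S: "\<And>t. t \<in> S \<Longrightarrow> (l, t) \<in> {(r1, r2). \<forall>(q1, q2)\<in>C. (inf q1 r1, inf q2 r2) \<in> E}"
  show "(l, Sup S) \<in> {(r1, r2). \<forall>(q1, q2)\<in>C. (inf q1 r1, inf q2 r2) \<in> E}"
  proof clarify
    fix q1 q2 assume "(q1, q2) \<in> C"
    then have "(inf q1 l, Sup (inf q2 ` S)) \<in> E"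
      using S by (intro mem_Sup_right[OF E]) auto
    then show "(inf q1 l, inf q2 (Sup S)) \<in> E"
      by (simp add: inf_Sup_right)
  qed
next
  fix b l r assume b: "b \<in> B"
  have "(inf q1 (fl b l), inf q2 r) \<in> E \<longleftrightarrow> (inf q1 l, inf q2 (fr b r)) \<in> E" for q1 q2
    using mem_sat[OF E b, of "inf l q1" "inf r q2"] fl_inf[OF b, of l q1] fr_inf[OF b, of r q2]
    by (simp add: inf_commute)
  then show "(fl b l, r) \<in> {(r1, r2). \<forall>(q1, q2)\<in>C. (inf q1 r1, inf q2 r2) \<in> E} \<longleftrightarrow>
      (l, fr b r) \<in> {(r1, r2). \<forall>(q1, q2)\<in>C. (inf q1 r1, inf q2 r2) \<in> E}"
    by auto
qed

lemma Int_tel_subset: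
  assumes E: "E \<in> tensor UNIV UNIV fl fr B"
    and DE: "\<And>p1 p2. (p1, p2) \<in> D \<Longrightarrow> (inf p1 l, inf p2 r) \<in> E"
  shows "D \<inter> tel (tensor UNIV UNIV fl fr B) l r \<subseteq> E"
proof
  let ?K = "{(r1, r2). \<forall>(q1, q2)\<in>D. (inf q1 r1, inf q2 r2) \<in> E}"
  have K: "tel (tensor UNIV UNIV fl fr B) l r \<subseteq> ?K"
    using DE by (intro tel_least meet_preimage_mem[OF E]) auto
  fix p assume p: "p \<in> D \<inter> tel (tensor UNIV UNIV fl fr B) l r"
  obtain p1 p2 where p12: "p = (p1, p2)"
    by fastforce
  have "\<forall>(q1, q2)\<in>D. (inf q1 p1, inf q2 p2) \<in> E"
    using p K unfolding p12 by auto
  then show "p \<in> E"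
    using p unfolding p12 by fastforce
qed

end

section \<open>Groupoid quantales\<close>

text \<open>Only the axioms needed below, with \<open>lact a x = a \<triangleright> x\<close>, \<open>ract x a = x \<triangleleft> a\<close>,
  \<open>invo x = x\<^sup>*\<close>, \<open>sigQ = \<sigma>\<^sub>Q\<close> and \<open>ups = \<upsilon>\<close>.\<close>

locale groupoid_quantale_laws =
  fixes mul :: "'q::complete_lattice \<Rightarrow> 'q \<Rightarrow> 'q"
    and invo :: "'q \<Rightarrow> 'q"
    and lact :: "'a::complete_lattice \<Rightarrow> 'q \<Rightarrow> 'q"
    and ract :: "'q \<Rightarrow> 'a \<Rightarrow> 'q"
    and sigQ :: "'q \<Rightarrow> 'a"
    and ups :: "'q \<Rightarrow> 'a"
  assumes mul_assoc: "mul (mul x y) z = mul x (mul y z)"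
    and mul_Sup_right: "mul x (Sup S) = Sup (mul x ` S)"
    and mul_Sup_left: "mul (Sup S) y = Sup ((\<lambda>x. mul x y) ` S)"
    and invo_invo [simp]: "invo (invo x) = x"
    and invo_mul: "invo (mul x y) = mul (invo y) (invo x)"
    and invo_Sup: "invo (Sup S) = Sup (invo ` S)"
    and lact_Sup_right: "lact a (Sup S) = Sup (lact a ` S)"
    and lact_Sup_left: "lact (Sup A) x = Sup ((\<lambda>a. lact a x) ` A)"
    and ract_Sup_left: "ract (Sup S) a = Sup ((\<lambda>x. ract x a) ` S)"
    and ract_Sup_right: "ract x (Sup A) = Sup (ract x ` A)"
    and mul_lact: "mul (lact a x) y = lact a (mul x y)"
    and mul_ract: "mul (ract x a) y = mul x (lact a y)"
    and ract_mul: "ract (mul x y) a = mul x (ract y a)"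
    and invo_lact_ract: "invo (lact a (ract x b)) = lact b (ract (invo x) a)"
    and Q_frame: "is_frame (UNIV :: 'q set)"
    and inf_lact: "inf (lact a x) y = lact a (inf x y)"
    and inf_ract: "inf y (ract x a) = ract (inf x y) a"
    and sigQ_Sup: "sigQ (Sup S) = Sup (sigQ ` S)"
    and sigQ_top: "sigQ top = top"
    and lact_sigQ_le: "lact (sigQ x) y \<le> mul (mul x (invo x)) y"
    and lact_sigQ_self: "lact (sigQ x) x = x"
    and sigQ_lact: "sigQ (lact a x) = inf a (sigQ x)"
    and ups_ract_top: "ups (ract top a) = a"
    and lact_ups_top: "lact (ups x) top = Sup {y. mul y (invo y) \<le> x}"

lemma groupoid_quantale_laws_if_groupoid_quantale:
  assumes "groupoid_quantale mul invo lact ract sigQ ups"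
  shows "groupoid_quantale_laws mul invo lact ract sigQ ups"
proof -
  note gq = assms[unfolded groupoid_quantale_def involutive_quantale_def
      left_A_module_def right_A_module_def sup_preserving_def]
  show ?thesis
    by unfold_locales (use gq in metis)+
qed

context groupoid_quantale_laws
begin

lemma Q_inf_Sup: "inf (x::'q) (Sup S) = Sup (inf x ` S)"
  using Q_frame by (simp add: is_frame_UNIV_iff)

lemma mul_mono: "x \<le> x' \<Longrightarrow> y \<le> y' \<Longrightarrow> mul x y \<le> mul x' y'"
  by (rule mono2_if_Sup_preserving[OF mul_Sup_right mul_Sup_left])

lemma lact_mono: "a \<le> a' \<Longrightarrow> x \<le> x' \<Longrightarrow> lact a x \<le> lact a' x'"
  by (rule mono2_if_Sup_preserving[OF lact_Sup_right lact_Sup_left])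

lemma ract_mono: "x \<le> x' \<Longrightarrow> a \<le> a' \<Longrightarrow> ract x a \<le> ract x' a'"
  by (rule mono2_if_Sup_preserving[OF ract_Sup_right ract_Sup_left])

lemma invo_mono: "x \<le> y \<Longrightarrow> invo x \<le> invo y"
  using mono_if_Sup_preserving[OF invo_Sup] by (simp add: monoD)

lemma sigQ_mono: "x \<le> y \<Longrightarrow> sigQ x \<le> sigQ y"
  using mono_if_Sup_preserving[OF sigQ_Sup] by (simp add: monoD)

lemma invo_top [simp]: "invo top = top"
  by (metis invo_invo invo_mono top.extremum top.extremum_uniqueI)

lemma lact_le: "lact a x \<le> x"
  by (metis inf_lact inf_idem inf.cobounded2)

lemma ract_le: "ract x a \<le> x"
  by (metis inf_ract inf_idem inf.cobounded1)

lemma lact_top [simp]: "lact top x = x"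
  by (metis lact_le lact_mono lact_sigQ_self order.antisym top_greatest)

text \<open>Unitality of the right action is not an axiom: it comes from \<open>\<upsilon>(1 \<triangleleft> 1) = 1\<close>, since
  \<open>\<upsilon>(a) \<triangleright> 1\<close> is the join of all \<open>x\<close> with \<open>x x\<^sup>* \<le> a\<close>, and each such \<open>x\<^sup>*\<close> lies below \<open>1 \<triangleleft> 1\<close>.\<close>

lemma ract_top_top: "ract top top = top"
proof -
  let ?c = "ract top top"
  have below: "invo x \<le> ?c" if "mul x (invo x) \<le> ?c" for x
  proof -
    have "invo x = lact (sigQ (invo x)) (invo x)"
      by (simp add: lact_sigQ_self)
    also have "\<dots> \<le> mul (invo x) (mul x (invo x))"
      using lact_sigQ_le[of "invo x" "invo x"] by (simp add: mul_assoc)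
    also have "\<dots> \<le> mul (invo x) ?c"
      using that by (rule mul_mono[OF order_refl])
    also have "\<dots> = ract (mul (invo x) top) top"
      by (simp add: ract_mul)
    also have "\<dots> \<le> ?c"
      by (rule ract_mono) simp_all
    finally show ?thesis .
  qed
  have "top = Sup {x. mul x (invo x) \<le> ?c}"
    using lact_ups_top[of ?c] by (simp add: ups_ract_top)
  then have "top = Sup (invo ` {x. mul x (invo x) \<le> ?c})"
    by (metis invo_Sup invo_top)
  also have "\<dots> \<le> ?c"
    using below by (auto intro: Sup_least)
  finally show ?thesis
    by (simp add: top_le)
qed

lemma ract_top [simp]: "ract x top = x"
  by (metis inf_ract inf_top_left inf_top_right ract_top_top)

lemma ract_eq_invo_lact: "ract x a = invo (lact a (invo x))"
  using invo_lact_ract[of a "invo x" top] by simp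

lemma ract_sigQ_invo: "ract x (sigQ (invo x)) = x"
  by (simp add: ract_eq_invo_lact lact_sigQ_self)

lemma ract_sigQ_le: "ract x (sigQ y) \<le> mul x (mul y (invo y))"
proof -
  have "ract x (sigQ y) = invo (lact (sigQ y) (invo x))"
    by (rule ract_eq_invo_lact)
  also have "\<dots> \<le> invo (mul (mul y (invo y)) (invo x))"
    by (rule invo_mono[OF lact_sigQ_le])
  also have "\<dots> = mul x (mul y (invo y))"
    by (simp add: invo_mul mul_assoc)
  finally show ?thesis .
qed

abbreviation QQ :: "('q \<times> 'q) set set" where
  "QQ \<equiv> tensor UNIV UNIV (\<lambda>a x. ract x a) lact UNIV"

sublocale QQ: frame_tensor "\<lambda>a x. ract x a" lact UNIV
  by unfold_locales (simp_all add: Q_inf_Sup inf_lact, metis inf_commute inf_ract)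

lemma mul_le_mem_QQ: "{(x, y). mul x y \<le> q} \<in> QQ"
proof (rule QQ.memI)
  fix x y x' y' assume "(x, y) \<in> {(x, y). mul x y \<le> q}" "x' \<le> x" "y' \<le> y"
  then show "(x', y') \<in> {(x, y). mul x y \<le> q}"
    using mul_mono[of x' x y' y] by simp
next
  fix S y assume "\<And>x. x \<in> S \<Longrightarrow> (x, y) \<in> {(x, y). mul x y \<le> q}"
  then show "(Sup S, y) \<in> {(x, y). mul x y \<le> q}"
    by (simp add: mul_Sup_left SUP_le_iff)
next
  fix x S assume "\<And>y. y \<in> S \<Longrightarrow> (x, y) \<in> {(x, y). mul x y \<le> q}"
  then show "(x, Sup S) \<in> {(x, y). mul x y \<le> q}"
    by (simp add: mul_Sup_right SUP_le_iff)
qed (simp add: mul_ract)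

lemma mult_radj_eq: "mult_radj mul lact ract q = {(x, y). mul x y \<le> q}"
proof -
  let ?S = "{D \<in> QQ. mult_map mul D \<le> q}"
  have "mult_map mul {(x, y). mul x y \<le> q} \<le> q"
    unfolding mult_map_def by (auto intro: Sup_least)
  then have "{(x, y). mul x y \<le> q} \<in> ?S"
    using mul_le_mem_QQ by blast
  then have "{(x, y). mul x y \<le> q} \<subseteq> c_lub QQ ?S"
    by (rule QQ.lub_upper[rotated]) blast
  moreover have "c_lub QQ ?S \<subseteq> {(x, y). mul x y \<le> q}"
  proof (rule QQ.lub_least[OF _ mul_le_mem_QQ])
    show "?S \<subseteq> QQ"
      by blast
  next
    fix D assume D: "D \<in> ?S"
    have "mul x y \<le> q" if "(x, y) \<in> D" for x y
    proof -
      have "mul x y \<le> mult_map mul D"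
        unfolding mult_map_def using that by (blast intro: Sup_upper)
      also have "\<dots> \<le> q"
        using D by simp
      finally show ?thesis .
    qed
    then show "D \<subseteq> {(x, y). mul x y \<le> q}"
      by auto
  qed
  ultimately show ?thesis
    by (simp add: mult_radj_def QQ_tensor_def)
qed

lemma G2_frame_eq: "G2_frame (\<lambda>a. lact a top) (\<lambda>a. ract top a) = QQ"
proof -
  have "(\<lambda>b x. c_meet UNIV (ract top b) x) = (\<lambda>a x. ract x a)"
    by (intro ext) (simp add: inf_commute inf_ract)
  moreover have "(\<lambda>b x. c_meet UNIV (lact b top) x) = lact"
    by (intro ext) (simp add: inf_lact)
  ultimately show ?thesis
    by (simp add: G2_frame_def pushout_def)
qed

end

section \<open>Principal \<open>Q\<close>-locales\<close>

text \<open>Here \<open>qact q x = q \<cdot> x\<close>, \<open>xact a x = a \<triangleright> x\<close>, \<open>ip = \<langle>-,-\<rangle>\<close>, \<open>sigX = \<sigma>\<^sub>X\<close>, and \<open>piS\<close>,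
  \<open>sigt\<close> are the inverse and direct image of \<open>\<pi> : X \<rightarrow> M\<close>.\<close>

locale principal_Q_locale_laws = groupoid_quantale_laws mul invo lact ract sigQ ups
  for mul :: "'q::complete_lattice \<Rightarrow> 'q \<Rightarrow> 'q" and invo lact
    and ract :: "'q \<Rightarrow> 'a::complete_lattice \<Rightarrow> 'q" and sigQ ups +
  fixes qact :: "'q \<Rightarrow> 'x::complete_lattice \<Rightarrow> 'x"
    and xact :: "'a \<Rightarrow> 'x \<Rightarrow> 'x"
    and ip :: "'x \<Rightarrow> 'x \<Rightarrow> 'q"
    and sigX :: "'x \<Rightarrow> 'a"
    and piS :: "'m::complete_lattice \<Rightarrow> 'x"
    and sigt :: "'x \<Rightarrow> 'm"
  assumes X_frame: "is_frame (UNIV :: 'x set)"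
    and qact_Sup_right: "qact q (Sup X) = Sup (qact q ` X)"
    and qact_Sup_left: "qact (Sup S) x = Sup ((\<lambda>q. qact q x) ` S)"
    and qact_mul: "qact (mul p q) x = qact p (qact q x)"
    and xact_Sup_right: "xact a (Sup X) = Sup (xact a ` X)"
    and xact_Sup_left: "xact (Sup A) x = Sup ((\<lambda>a. xact a x) ` A)"
    and xact_inf_left: "xact (inf a b) x = xact a (xact b x)"
    and xact_top [simp]: "xact top x = x"
    and qact_lact: "qact (lact a q) x = xact a (qact q x)"
    and qact_ract: "qact (ract q a) x = qact q (xact a x)"
    and xact_inf: "xact a (inf x y) = inf (xact a x) y"
    and ip_qact: "ip (qact q x) y = mul q (ip x y)"
    and lact_ip_top: "lact a (ip x top) = ip (xact a x) top"
    and ip_Sup: "ip (Sup X) y = Sup ((\<lambda>x. ip x y) ` X)"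
    and ip_sym: "ip x y = invo (ip y x)"
    and sigX_mono: "mono sigX"
    and sigX_top: "sigX top = top"
    and xact_sigX_le: "xact (sigX x) top \<le> qact (ip x x) top"
    and xact_sigX_self: "xact (sigX x) x = x"
    and sigX_qact: "sigX (qact q x) \<le> sigQ q"
    and alpha_star_sup_hom: "sup_hom UNIV (QX_tensor ract xact) (alpha_star ract xact qact)"
    and xact_ups_Sup: "Sup {xact (ups q) y | q y. qact q y \<le> x} = x"
    and M_frame: "is_frame (UNIV :: 'm set)"
    and piS_open: "open_dimage UNIV UNIV piS sigt"
    and sigt_top: "sigt top = top"
    and sigt_qact: "sigt (qact q x) = sigt (xact (sigQ (invo q)) x)"
    and phi_iso: "frame_iso (XX_tensor piS) (QX_tensor ract xact) (phi_map ract xact qact)"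

lemma principal_Q_locale_laws_if_principal_Q_locale:
  assumes "groupoid_quantale mul invo lact ract sigQ ups"
    and "principal_Q_locale mul invo lact ract sigQ ups qact xact ip sigX piS sigt"
  shows "principal_Q_locale_laws mul invo lact ract sigQ ups qact xact ip sigX piS sigt"
proof -
  note pq = assms(2)[unfolded principal_Q_locale_def Q_locale_def stably_supported_def
      pre_Hilbert_def Q_module_def left_A_module_def]
  show ?thesis
    by (intro principal_Q_locale_laws.intro principal_Q_locale_laws_axioms.intro
        groupoid_quantale_laws_if_groupoid_quantale[OF assms(1)]) (use pq in metis)+
qed

context principal_Q_locale_laws
begin

lemma X_inf_Sup: "inf (x::'x) (Sup X) = Sup (inf x ` X)"
  using X_frame by (simp add: is_frame_UNIV_iff)

lemma qact_mono: "q \<le> q' \<Longrightarrow> x \<le> x' \<Longrightarrow> qact q x \<le> qact q' x'"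
  by (rule mono2_if_Sup_preserving[OF qact_Sup_right qact_Sup_left])

lemma xact_mono: "a \<le> a' \<Longrightarrow> x \<le> x' \<Longrightarrow> xact a x \<le> xact a' x'"
  by (rule mono2_if_Sup_preserving[OF xact_Sup_right xact_Sup_left])

lemma ip_mono_left: "x \<le> x' \<Longrightarrow> ip x y \<le> ip x' y"
  using mono_if_Sup_preserving[of "\<lambda>x. ip x y", OF ip_Sup] by (simp add: mono_def)

lemma ip_mono_right: "y \<le> y' \<Longrightarrow> ip x y \<le> ip x y'"
  by (metis ip_sym ip_mono_left invo_mono)

lemma xact_eq_inf: "xact a x = inf (xact a top) x"
  by (metis xact_inf inf_top_left)

lemma sigX_le_sigQ_ip: "sigX x \<le> sigQ (ip x x)"
proof -
  have "x \<le> xact (sigX x) top"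
    by (metis xact_sigX_self xact_mono order_refl top_greatest)
  also have "\<dots> \<le> qact (ip x x) top"
    by (rule xact_sigX_le)
  finally have "sigX x \<le> sigX (qact (ip x x) top)"
    using sigX_mono by (metis monoD)
  also have "\<dots> \<le> sigQ (ip x x)"
    by (rule sigX_qact)
  finally show ?thesis .
qed

lemma sigQ_ip_top_le_sigX: "sigQ (ip x top) \<le> sigX x"
  by (metis lact_ip_top xact_sigX_self sigQ_lact inf.cobounded1)

lemma sigX_eq_sigQ_ip_self: "sigX x = sigQ (ip x x)"
  by (meson sigX_le_sigQ_ip sigQ_ip_top_le_sigX ip_mono_right sigQ_mono top_greatest order.antisym order_trans)

lemma sigX_eq_sigQ_ip_top: "sigX x = sigQ (ip x top)"
  by (meson sigX_le_sigQ_ip sigQ_ip_top_le_sigX ip_mono_right sigQ_mono top_greatest order.antisym order_trans)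

lemma sigX_xact: "sigX (xact a x) = inf a (sigX x)"
  by (simp add: sigX_eq_sigQ_ip_top lact_ip_top[symmetric] sigQ_lact)

lemma sigX_le_iff: "sigX x \<le> a \<longleftrightarrow> x \<le> xact a top"
proof
  assume "sigX x \<le> a"
  then show "x \<le> xact a top"
    by (metis xact_sigX_self xact_mono top_greatest)
next
  assume "x \<le> xact a top"
  then have "sigX x \<le> sigX (xact a top)"
    using sigX_mono by (simp add: monoD)
  then show "sigX x \<le> a"
    by (simp add: sigX_xact)
qed

abbreviation QX :: "('q \<times> 'x) set set" where
  "QX \<equiv> tensor UNIV UNIV (\<lambda>a q. ract q a) xact UNIV"

sublocale QX: frame_tensor "\<lambda>a q. ract q a" xact UNIV
  by unfold_locales (simp_all add: Q_inf_Sup X_inf_Sup xact_inf, metis inf_commute inf_ract)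

lemma act_le_mem_QX: "{(q, y). qact q y \<le> x} \<in> QX"
proof (rule QX.memI)
  fix q y q' y' assume "(q, y) \<in> {(q, y). qact q y \<le> x}" "q' \<le> q" "y' \<le> y"
  then show "(q', y') \<in> {(q, y). qact q y \<le> x}"
    using qact_mono[of q' q y' y] by simp
next
  fix S y assume "\<And>q. q \<in> S \<Longrightarrow> (q, y) \<in> {(q, y). qact q y \<le> x}"
  then show "(Sup S, y) \<in> {(q, y). qact q y \<le> x}"
    by (simp add: qact_Sup_left SUP_le_iff)
next
  fix q Y assume "\<And>y. y \<in> Y \<Longrightarrow> (q, y) \<in> {(q, y). qact q y \<le> x}"
  then show "(q, Sup Y) \<in> {(q, y). qact q y \<le> x}"
    by (simp add: qact_Sup_right SUP_le_iff)
qed (simp add: qact_ract)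

lemma alpha_star_eq: "alpha_star ract xact qact x = {(q, y). qact q y \<le> x}"
proof -
  let ?S = "{tel QX q y | q y. qact q y \<le> x}"
  have S: "?S \<subseteq> QX"
    using QX.tel_mem by blast
  have "c_lub QX ?S \<subseteq> {(q, y). qact q y \<le> x}"
    using QX.tel_least[OF act_le_mem_QX] by (intro QX.lub_least[OF S act_le_mem_QX]) auto
  moreover have "(q, y) \<in> c_lub QX ?S" if "qact q y \<le> x" for q y
    using that QX.tel_self QX.lub_upper[OF S, of "tel QX q y"] by blast
  ultimately show ?thesis
    by (auto simp: alpha_star_def QX_tensor_def)
qed

lemma G1X_frame_eq: "G1X_frame (\<lambda>a. ract top a) (\<lambda>a. xact a top) = QX"
proof -
  have "(\<lambda>b q. c_meet UNIV (ract top b) q) = (\<lambda>a q. ract q a)"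
    by (intro ext) (simp add: inf_commute inf_ract)
  moreover have "(\<lambda>b y. c_meet UNIV (xact b top) y) = xact"
    by (intro ext) (simp add: xact_eq_inf[symmetric])
  ultimately show ?thesis
    by (simp add: G1X_frame_def pushout_def)
qed

section \<open>The bundle structure\<close>

lemma anchor_frame_hom: "frame_hom UNIV UNIV (\<lambda>a. xact a top)"
  unfolding frame_hom_UNIV_iff
  by (simp add: xact_Sup_left image_image xact_inf_left xact_eq_inf[of _ "xact _ top"])

lemma anchor_open_surjection: "open_surjection UNIV UNIV (\<lambda>a. xact a top)"
proof -
  have "sigX (inf x (xact a top)) = inf (sigX x) a" for x a
    by (metis inf_commute sigX_xact xact_eq_inf)
  then have "open_dimage UNIV UNIV (\<lambda>a. xact a top) sigX"
    by (simp add: open_dimage_UNIV_iff anchor_frame_hom sigX_le_iff)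
  then show ?thesis
    using sigX_top by (rule open_surjection_if_open_dimage)
qed

lemma bundle_open_surjection: "open_surjection UNIV UNIV piS"
  by (rule open_surjection_if_open_dimage[OF piS_open sigt_top])

lemma sigt_le_iff: "sigt x \<le> m \<longleftrightarrow> x \<le> piS m"
  using piS_open by (simp add: open_dimage_UNIV_iff)

lemma alpha_star_frame_hom: "frame_hom UNIV QX (alpha_star ract xact qact)"
  unfolding frame_hom_def
proof (intro conjI ballI allI impI)
  show "alpha_star ract xact qact x \<in> QX" for x
    by (simp add: alpha_star_eq act_le_mem_QX)
  show "alpha_star ract xact qact (c_top UNIV) = c_top QX"
    by (simp add: alpha_star_eq QX.top_eq)
  show "alpha_star ract xact qact (c_meet UNIV x y) =
      c_meet QX (alpha_star ract xact qact x) (alpha_star ract xact qact y)" for x y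
    by (auto simp: alpha_star_eq QX.meet_eq[OF act_le_mem_QX act_le_mem_QX])
  show "alpha_star ract xact qact (c_lub UNIV T) = c_lub QX (alpha_star ract xact qact ` T)" for T
    using alpha_star_sup_hom by (simp add: sup_hom_def QX_tensor_def)
qed

lemma ract_sigX_le_if_act_le_anchor:
  assumes "qact q y \<le> xact b top"
  shows "ract q (sigX y) \<le> lact b top"
proof -
  let ?w = "ip y y"
  have "ip (qact q y) y \<le> ip (xact b top) y"
    by (rule ip_mono_left[OF assms])
  also have "\<dots> \<le> ip (xact b top) top"
    by (rule ip_mono_right) simp
  finally have ip_le: "ip (qact q y) y \<le> ip (xact b top) top" .
  have "ract q (sigX y) \<le> mul q (mul ?w (invo ?w))"
    unfolding sigX_eq_sigQ_ip_self by (rule ract_sigQ_le)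
  also have "\<dots> = mul (ip (qact q y) y) ?w"
    using ip_sym[of y y] by (simp add: ip_qact mul_assoc)
  also have "\<dots> \<le> mul (ip (xact b top) top) ?w"
    using ip_le by (rule mul_mono) simp
  also have "\<dots> = lact b (mul (ip top top) ?w)"
    by (simp add: lact_ip_top[symmetric] mul_lact)
  also have "\<dots> \<le> lact b top"
    by (rule lact_mono) simp_all
  finally show ?thesis .
qed

lemma alpha_star_xact_top: "alpha_star ract xact qact (xact b top) = tel QX (lact b top) top"
proof (rule subset_antisym)
  show "alpha_star ract xact qact (xact b top) \<subseteq> tel QX (lact b top) top"
  proof clarify
    fix q y assume "(q, y) \<in> alpha_star ract xact qact (xact b top)"
    then have "ract q (sigX y) \<le> lact b top"
      by (simp add: alpha_star_eq ract_sigX_le_if_act_le_anchor)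
    then have "(ract q (sigX y), y) \<in> tel QX (lact b top) top"
      by (rule QX.mem_down[OF QX.tel_mem QX.tel_self]) simp
    then show "(q, y) \<in> tel QX (lact b top) top"
      by (simp add: QX.mem_sat[OF QX.tel_mem] xact_sigX_self)
  qed
  have "qact (lact b top) top \<le> xact b top"
    by (simp add: qact_lact xact_mono)
  then show "tel QX (lact b top) top \<subseteq> alpha_star ract xact qact (xact b top)"
    by (simp add: alpha_star_eq QX.tel_least[OF act_le_mem_QX])
qed

lemma alpha_star_piS: "alpha_star ract xact qact (piS m) = tel QX top (piS m)"
proof (rule subset_antisym)
  show "alpha_star ract xact qact (piS m) \<subseteq> tel QX top (piS m)"
  proof clarify
    fix q y assume "(q, y) \<in> alpha_star ract xact qact (piS m)"
    then have "xact (sigQ (invo q)) y \<le> piS m"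
      by (simp add: alpha_star_eq sigt_le_iff[symmetric] sigt_qact)
    then have "(q, xact (sigQ (invo q)) y) \<in> tel QX top (piS m)"
      by (rule QX.mem_down[OF QX.tel_mem QX.tel_self, rotated]) simp
    then show "(q, y) \<in> tel QX top (piS m)"
      by (simp add: QX.mem_sat[OF QX.tel_mem, symmetric] ract_sigQ_invo)
  qed
  have "qact top (piS m) \<le> piS m"
    by (simp add: sigt_le_iff[symmetric] sigt_qact sigQ_top) (simp add: sigt_le_iff)
  then show "tel QX top (piS m) \<subseteq> alpha_star ract xact qact (piS m)"
    by (simp add: alpha_star_eq QX.tel_least[OF act_le_mem_QX])
qed

lemma action_unit: "copair QX UNIV (\<lambda>q. xact (ups q) top) id (alpha_star ract xact qact x) = x"
proof -
  have "{c_meet UNIV (xact (ups q) top) (id y) | q y. (q, y) \<in> alpha_star ract xact qact x} =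
      {xact (ups q) y | q y. qact q y \<le> x}"
    by (auto simp: alpha_star_eq xact_eq_inf[symmetric])
  then show ?thesis
    by (simp add: copair_def xact_ups_Sup)
qed

lemma copair_alpha_star_inj2_eq_phi_map:
  "copair T QX (alpha_star ract xact qact) (inj2 QX UNIV UNIV) D = phi_map ract xact qact D"
proof -
  let ?S1 = "{c_meet QX (alpha_star ract xact qact x) (inj2 QX UNIV UNIV y) | x y. (x, y) \<in> D}"
  let ?S2 = "{tel QX q (inf z y) | q z x y. (x, y) \<in> D \<and> qact q z \<le> x}"
  have S1: "?S1 = {{(q, z). qact q z \<le> x} \<inter> tel QX top y | x y. (x, y) \<in> D}"
    by (simp add: alpha_star_eq inj2_def QX.meet_eq[OF act_le_mem_QX QX.tel_mem])
  have S1_sub: "?S1 \<subseteq> QX"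
    unfolding S1 using QX.Int_mem[OF act_le_mem_QX QX.tel_mem] by blast
  have S2_sub: "?S2 \<subseteq> QX"
    using QX.tel_mem by blast
  have "c_lub QX ?S1 = c_lub QX ?S2"
  proof (rule QX.lub_antisym[OF S1_sub S2_sub])
    fix s assume "s \<in> ?S1"
    then obtain x y where s: "s = {(q, z). qact q z \<le> x} \<inter> tel QX top y" and xy: "(x, y) \<in> D"
      unfolding S1 by blast
    show "s \<subseteq> c_lub QX ?S2"
      unfolding s
    proof (rule QX.Int_tel_subset[OF QX.lub_mem[OF S2_sub]])
      fix q z assume "(q, z) \<in> {(q, z). qact q z \<le> x}"
      then have "tel QX q (inf z y) \<subseteq> c_lub QX ?S2"
        using xy by (intro QX.lub_upper[OF S2_sub]) auto
      then show "(inf q top, inf z y) \<in> c_lub QX ?S2"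
        using QX.tel_self by auto
    qed
  next
    fix s assume "s \<in> ?S2"
    then obtain q z x y where s: "s = tel QX q (inf z y)" and xy: "(x, y) \<in> D" and qz: "qact q z \<le> x"
      by blast
    have "(q, inf z y) \<in> {(q, z). qact q z \<le> x}"
      using qz qact_mono[of q q "inf z y" z] by auto
    moreover have "(q, inf z y) \<in> tel QX top y"
      by (rule QX.mem_down[OF QX.tel_mem QX.tel_self]) auto
    ultimately have "s \<subseteq> {(q, z). qact q z \<le> x} \<inter> tel QX top y"
      unfolding s by (intro QX.tel_least[OF QX.Int_mem[OF act_le_mem_QX QX.tel_mem]]) auto
    also have "\<dots> \<subseteq> c_lub QX ?S1"
      using xy by (intro QX.lub_upper[OF S1_sub]) (auto simp: S1)
    finally show "s \<subseteq> c_lub QX ?S1" .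
  qed
  then show ?thesis
    unfolding copair_def phi_map_def QX_tensor_def by simp
qed

lemma alpha_star_inj2_iso:
  "frame_iso (pushout UNIV UNIV piS piS) QX
     (copair (pushout UNIV UNIV piS piS) QX (alpha_star ract xact qact) (inj2 QX UNIV UNIV))"
proof -
  have "copair (pushout UNIV UNIV piS piS) QX (alpha_star ract xact qact) (inj2 QX UNIV UNIV) =
      phi_map ract xact qact"
    by (rule ext) (rule copair_alpha_star_inj2_eq_phi_map)
  then show ?thesis
    using phi_iso by (simp add: XX_tensor_def QX_tensor_def)
qed

section \<open>Associativity of the action\<close>

text \<open>\<open>GX\<close> is the frame of \<open>G\<^sub>2 \<times>\<^sub>G\<^sub>0 X\<close>.  Its elements described pointwise by a predicate on the
  generators \<open>q\<^sub>1 \<otimes> q\<^sub>2 \<otimes> w\<close> are the \<open>extent\<close>s of admissible predicates.\<close>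

abbreviation GX :: "(('q \<times> 'q) set \<times> 'x) set set" where
  "GX \<equiv> tensor QQ UNIV (\<lambda>b l. tel QQ top (ract top b) \<inter> l) xact UNIV"

sublocale GX: closure_system GX "QQ \<times> UNIV"
  by (rule tensor_closure_system) (auto intro: QQ.lub_mem QQ.Int_mem QQ.tel_mem)

lemma G2X_frame_eq: "G2X_frame (\<lambda>a. lact a top) (\<lambda>a. ract top a) (\<lambda>a. xact a top) = GX"
  unfolding G2X_frame_def G2_frame_eq pushout_def inj2_def
proof (rule tensor_cong)
  show "c_meet QQ (tel QQ (c_top UNIV) (ract top b)) l = tel QQ top (ract top b) \<inter> l" if "l \<in> QQ" for b l
    using QQ.meet_eq[OF QQ.tel_mem that] by simp
  show "c_meet UNIV (xact b top) y = xact b y" for b y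
    by (simp add: xact_eq_inf[symmetric])
qed

lemma GX_down: "E \<in> GX \<Longrightarrow> (l, w) \<in> E \<Longrightarrow> l' \<in> QQ \<Longrightarrow> l' \<subseteq> l \<Longrightarrow> w' \<le> w \<Longrightarrow> (l', w') \<in> E"
  using tensorD_down[of E QQ UNIV] by blast

lemma GX_lub_left: "E \<in> GX \<Longrightarrow> S \<subseteq> QQ \<Longrightarrow> (\<And>l. l \<in> S \<Longrightarrow> (l, w) \<in> E) \<Longrightarrow> (c_lub QQ S, w) \<in> E"
  using tensorD_lub_left[of E QQ UNIV _ _ UNIV S w] by blast

lemma GX_tel_self: "l \<in> QQ \<Longrightarrow> (l, w) \<in> tel GX l w"
  by (simp add: GX.tel_in)

lemma copair_alpha_star_GX:
  assumes "\<And>q. f q \<in> GX" and "\<And>y. g y \<in> GX"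
  shows "copair QX GX f g (alpha_star ract xact qact x) = c_lub GX {f q \<inter> g y | q y. qact q y \<le> x}"
  unfolding copair_def alpha_star_eq by (simp add: GX.meet_eq[OF assms])

lemma Int_family_subset_GX:
  assumes "\<And>q. f q \<in> GX" and "\<And>y. g y \<in> GX"
  shows "{f q \<inter> g y | q y. qact q y \<le> x} \<subseteq> GX"
  using GX.Int_mem[OF assms] by blast

definition extent :: "('q \<Rightarrow> 'q \<Rightarrow> 'x \<Rightarrow> bool) \<Rightarrow> (('q \<times> 'q) set \<times> 'x) set" where
  "extent P = {(l, w). l \<in> QQ \<and> (\<forall>(q1, q2)\<in>l. P q1 q2 w)}"

definition admissible :: "('q \<Rightarrow> 'q \<Rightarrow> 'x \<Rightarrow> bool) \<Rightarrow> bool" where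
  "admissible P \<longleftrightarrow> (\<forall>w. {(q1, q2). P q1 q2 w} \<in> QQ) \<and>
     (\<forall>q1 q2 W. (\<forall>w\<in>W. P q1 q2 w) \<longrightarrow> P q1 q2 (Sup W)) \<and>
     (\<forall>q1 q2 w w'. w' \<le> w \<longrightarrow> P q1 q2 w \<longrightarrow> P q1 q2 w') \<and>
     (\<forall>q1 q2 a w. P q1 (ract q2 a) w \<longleftrightarrow> P q1 q2 (xact a w))"

lemma admissibleD:
  assumes "admissible P"
  shows admissible_mem_QQ: "{(q1, q2). P q1 q2 w} \<in> QQ"
    and admissible_Sup: "(\<And>w. w \<in> W \<Longrightarrow> P q1 q2 w) \<Longrightarrow> P q1 q2 (Sup W)"
    and admissible_down: "w' \<le> w \<Longrightarrow> P q1 q2 w \<Longrightarrow> P q1 q2 w'"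
    and admissible_sat: "P q1 (ract q2 a) w \<longleftrightarrow> P q1 q2 (xact a w)"
proof -
  note P = assms[unfolded admissible_def]
  show "{(q1, q2). P q1 q2 w} \<in> QQ"
    using P by simp
  show "(\<And>w. w \<in> W \<Longrightarrow> P q1 q2 w) \<Longrightarrow> P q1 q2 (Sup W)"
    using P by simp
  show "w' \<le> w \<Longrightarrow> P q1 q2 w \<Longrightarrow> P q1 q2 w'"
    using P by simp
  show "P q1 (ract q2 a) w \<longleftrightarrow> P q1 q2 (xact a w)"
    using P by simp
qed

lemma extent_mem:
  assumes P: "admissible P"
  shows "extent P \<in> GX"
proof (rule tensorI)
  show "extent P \<subseteq> QQ \<times> UNIV"
    unfolding extent_def by auto
next
  fix l w l' w' assume "(l, w) \<in> extent P" "l' \<in> QQ" "l' \<le> l" "w' \<le> w"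
  then show "(l', w') \<in> extent P"
    unfolding extent_def using admissible_down[OF P] by blast
next
  fix S w assume S: "S \<subseteq> QQ" "\<And>l. l \<in> S \<Longrightarrow> (l, w) \<in> extent P"
  have "c_lub QQ S \<subseteq> {(q1, q2). P q1 q2 w}"
    using S unfolding extent_def by (intro QQ.lub_least[OF S(1) admissible_mem_QQ[OF P]]) blast
  then show "(c_lub QQ S, w) \<in> extent P"
    unfolding extent_def using QQ.lub_mem[OF S(1)] by blast
next
  fix l W assume l: "l \<in> QQ" and W: "\<And>w. w \<in> W \<Longrightarrow> (l, w) \<in> extent P"
  have "P q1 q2 (Sup W)" if "(q1, q2) \<in> l" for q1 q2
    using W that unfolding extent_def by (intro admissible_Sup[OF P]) blast
  then show "(l, c_lub UNIV W) \<in> extent P"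
    using l unfolding extent_def by auto
next
  fix b l w assume l: "l \<in> QQ"
  let ?t = "tel QQ top (ract top b)"
  show "(?t \<inter> l, w) \<in> extent P \<longleftrightarrow> (l, xact b w) \<in> extent P"
  proof
    assume tl: "(?t \<inter> l, w) \<in> extent P"
    have "P q1 q2 (xact b w)" if q: "(q1, q2) \<in> l" for q1 q2
    proof -
      have "(q1, ract q2 b) \<in> l"
        by (rule QQ.mem_down[OF l q]) (simp_all add: ract_le)
      moreover have "(q1, ract q2 b) \<in> ?t"
        by (rule QQ.mem_down[OF QQ.tel_mem QQ.tel_self]) (simp_all add: ract_mono)
      ultimately have "P q1 (ract q2 b) w"
        using tl unfolding extent_def by blast
      then show ?thesis
        by (simp add: admissible_sat[OF P])
    qed
    then show "(l, xact b w) \<in> extent P"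
      using l unfolding extent_def by blast
  next
    assume lw: "(l, xact b w) \<in> extent P"
    have "l \<inter> ?t \<subseteq> {(q1, q2). P q1 q2 w}"
    proof (rule QQ.Int_tel_subset[OF admissible_mem_QQ[OF P]])
      fix p1 p2 assume "(p1, p2) \<in> l"
      then have "P p1 p2 (xact b w)"
        using lw unfolding extent_def by blast
      then have "P p1 (ract p2 b) w"
        by (simp add: admissible_sat[OF P])
      then show "(inf p1 top, inf p2 (ract top b)) \<in> {(q1, q2). P q1 q2 w}"
        by (simp add: inf_ract)
    qed
    then show "(?t \<inter> l, w) \<in> extent P"
      using QQ.Int_mem[OF QQ.tel_mem l] unfolding extent_def by blast
  qed
qed

definition meet_restrict ::
  "('q \<Rightarrow> 'q \<Rightarrow> 'x \<Rightarrow> bool) \<Rightarrow> ('q \<times> 'q \<times> 'x) set \<Rightarrow> 'q \<Rightarrow> 'q \<Rightarrow> 'x \<Rightarrow> bool" where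
  "meet_restrict P C q1 q2 w \<longleftrightarrow> (\<forall>(c1, c2, c3)\<in>C. P (inf c1 q1) (inf c2 q2) (inf c3 w))"

lemma admissible_meet_restrict:
  assumes P: "admissible P"
  shows "admissible (meet_restrict P C)"
  unfolding admissible_def
proof (intro conjI allI impI)
  fix w
  let ?G = "{{(q1, q2). P (inf c1 q1) (inf c2 q2) (inf c3 w)} | c1 c2 c3. (c1, c2, c3) \<in> C}"
  have "{(q1, q2). P (inf c1 q1) (inf c2 q2) (inf c3 w)} \<in> QQ" for c1 c2 c3
    using QQ.meet_preimage_mem[OF admissible_mem_QQ[OF P], of "{(c1, c2)}" "inf c3 w"] by simp
  then have "UNIV \<inter> \<Inter>?G \<in> QQ"
    by (intro QQ.Int_Inter_mem) blast
  moreover have "UNIV \<inter> \<Inter>?G = {(q1, q2). meet_restrict P C q1 q2 w}"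
    unfolding meet_restrict_def by auto
  ultimately show "{(q1, q2). meet_restrict P C q1 q2 w} \<in> QQ"
    by simp
next
  fix q1 q2 W assume W: "\<forall>w\<in>W. meet_restrict P C q1 q2 w"
  have "P (inf c1 q1) (inf c2 q2) (Sup (inf c3 ` W))" if "(c1, c2, c3) \<in> C" for c1 c2 c3
    using W that unfolding meet_restrict_def by (intro admissible_Sup[OF P]) fastforce
  then show "meet_restrict P C q1 q2 (Sup W)"
    unfolding meet_restrict_def by (auto simp: X_inf_Sup)
next
  fix q1 q2 w w' assume w': "w' \<le> w" and w: "meet_restrict P C q1 q2 w"
  have "P (inf c1 q1) (inf c2 q2) (inf c3 w')" if "(c1, c2, c3) \<in> C" for c1 c2 c3
    using w that w' unfolding meet_restrict_def by (auto intro: admissible_down[OF P] inf_mono)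
  then show "meet_restrict P C q1 q2 w'"
    unfolding meet_restrict_def by auto
next
  fix q1 q2 a w
  have "P (inf c1 q1) (inf c2 (ract q2 a)) (inf c3 w) \<longleftrightarrow> P (inf c1 q1) (inf c2 q2) (inf c3 (xact a w))"
    for c1 c2 c3
  proof -
    have "inf c2 (ract q2 a) = ract (inf c2 q2) a"
      by (simp add: inf_ract inf_commute)
    moreover have "inf c3 (xact a w) = xact a (inf c3 w)"
      by (metis xact_inf inf_commute)
    ultimately show ?thesis
      by (simp add: admissible_sat[OF P])
  qed
  then show "meet_restrict P C q1 (ract q2 a) w \<longleftrightarrow> meet_restrict P C q1 q2 (xact a w)"
    unfolding meet_restrict_def by auto
qed

text \<open>The counterpart of \<open>QQ.Int_tel_subset\<close> for \<open>GX\<close>, with pointwise targets.\<close>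

lemma Int_tel_subset_extent:
  assumes P: "admissible P" and l0: "l0 \<in> QQ"
    and K: "\<And>l w q1 q2 r1 r2. (l, w) \<in> K \<Longrightarrow> (q1, q2) \<in> l \<Longrightarrow> (r1, r2) \<in> l0 \<Longrightarrow>
      P (inf q1 r1) (inf q2 r2) (inf w z)"
  shows "K \<inter> tel GX l0 z \<subseteq> extent P"
proof
  let ?C = "{(q1, q2, w) | q1 q2 w l. (l, w) \<in> K \<and> (q1, q2) \<in> l}"
  have "(l0, z) \<in> extent (meet_restrict P ?C)"
    using l0 K unfolding extent_def meet_restrict_def by fast
  then have tel_sub: "tel GX l0 z \<subseteq> extent (meet_restrict P ?C)"
    by (rule GX.tel_least[OF extent_mem[OF admissible_meet_restrict[OF P]]])
  fix p assume p: "p \<in> K \<inter> tel GX l0 z"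
  obtain l w where lw: "p = (l, w)"
    by fastforce
  have l: "l \<in> QQ \<and> (\<forall>(q1, q2)\<in>l. meet_restrict P ?C q1 q2 w)"
    using p tel_sub unfolding lw extent_def by blast
  have "P q1 q2 w" if q: "(q1, q2) \<in> l" for q1 q2
  proof -
    have "meet_restrict P ?C q1 q2 w"
      using l q by blast
    moreover have "(q1, q2, w) \<in> ?C"
      using p q unfolding lw by blast
    ultimately show ?thesis
      unfolding meet_restrict_def by fastforce
  qed
  then show "p \<in> extent P"
    using l unfolding lw extent_def by blast
qed

lemma extent_subset_if_generators:
  assumes E: "E \<in> GX" and P: "\<And>q1 q2 w. P q1 q2 w \<Longrightarrow> (tel QQ q1 q2, w) \<in> E"
  shows "extent P \<subseteq> E"
proof clarify
  fix l w assume "(l, w) \<in> extent P"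
  then have l: "l \<in> QQ" and lw: "\<And>q1 q2. (q1, q2) \<in> l \<Longrightarrow> P q1 q2 w"
    unfolding extent_def by auto
  have "(c_lub QQ {tel QQ q1 q2 | q1 q2. (q1, q2) \<in> l}, w) \<in> E"
    using QQ.tel_mem P lw by (intro GX_lub_left[OF E]) auto
  then show "(l, w) \<in> E"
    by (simp add: QQ.lub_tels[OF l])
qed

lemma qact_le_iff_le_Sup: "qact q w \<le> x \<longleftrightarrow> q \<le> Sup {p. qact p w \<le> x}"
proof
  assume "q \<le> Sup {p. qact p w \<le> x}"
  then have "qact q w \<le> qact (Sup {p. qact p w \<le> x}) w"
    by (rule qact_mono) simp
  also have "\<dots> \<le> x"
    by (simp add: qact_Sup_left SUP_le_iff)
  finally show "qact q w \<le> x" .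
qed (simp add: Sup_upper)

definition act2_le :: "'x \<Rightarrow> 'q \<Rightarrow> 'q \<Rightarrow> 'x \<Rightarrow> bool" where
  "act2_le x q1 q2 w \<longleftrightarrow> qact q1 (qact q2 w) \<le> x"

lemma act2_le_antimono:
  assumes "q1' \<le> q1" "q2' \<le> q2" "w' \<le> w" and "act2_le x q1 q2 w"
  shows "act2_le x q1' q2' w'"
proof -
  have "qact q1' (qact q2' w') \<le> qact q1 (qact q2 w)"
    using assms(1-3) by (intro qact_mono) simp_all
  with assms(4) show ?thesis
    unfolding act2_le_def by simp
qed

lemma admissible_act2_le: "admissible (act2_le x)"
  unfolding admissible_def
proof (intro conjI allI impI)
  fix w
  have "act2_le x q1 q2 w \<longleftrightarrow> mul q1 q2 \<le> Sup {p. qact p w \<le> x}" for q1 q2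
    unfolding act2_le_def qact_mul[symmetric] by (rule qact_le_iff_le_Sup)
  then show "{(q1, q2). act2_le x q1 q2 w} \<in> QQ"
    by (simp add: mul_le_mem_QQ)
next
  fix q1 q2 W assume "\<forall>w\<in>W. act2_le x q1 q2 w"
  then show "act2_le x q1 q2 (Sup W)"
    by (simp add: act2_le_def qact_Sup_right image_image SUP_le_iff)
next
  fix q1 q2 w w' assume "w' \<le> w" "act2_le x q1 q2 w"
  then show "act2_le x q1 q2 w'"
    by (rule act2_le_antimono[rotated 2]) simp_all
qed (simp add: act2_le_def qact_ract)

lemma mult_then_act_eq_extent:
  "copair QX GX (\<lambda>q. tel GX {(p1, p2). mul p1 p2 \<le> q} top) (\<lambda>y. tel GX UNIV y) (alpha_star ract xact qact x) =
     extent (act2_le x)"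
  (is "?lhs = _")
proof -
  let ?M = "\<lambda>q. {(p1, p2). mul p1 p2 \<le> q}"
  let ?S = "{tel GX (?M q) top \<inter> tel GX UNIV y | q y. qact q y \<le> x}"
  have S: "?S \<subseteq> GX"
    by (rule Int_family_subset_GX) (rule GX.tel_mem)+
  have lhs: "?lhs = c_lub GX ?S"
    by (rule copair_alpha_star_GX) (rule GX.tel_mem)+
  have "c_lub GX ?S \<subseteq> extent (act2_le x)"
  proof (rule GX.lub_least[OF S extent_mem[OF admissible_act2_le]])
    fix s assume "s \<in> ?S"
    then obtain q y where s: "s = tel GX (?M q) top \<inter> tel GX UNIV y" and qy: "qact q y \<le> x"
      by blast
    let ?P = "meet_restrict (act2_le x) {(top, top, y)}"
    have "act2_le x q1 q2 y" if "mul q1 q2 \<le> q" for q1 q2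
      using qy order_trans[OF qact_mono[OF that order_refl]] by (simp add: act2_le_def qact_mul)
    then have "(?M q, top) \<in> extent ?P"
      using mul_le_mem_QQ by (simp add: extent_def meet_restrict_def)
    then have M: "tel GX (?M q) top \<subseteq> extent ?P"
      by (rule GX.tel_least[OF extent_mem[OF admissible_meet_restrict[OF admissible_act2_le]]])
    show "s \<subseteq> extent (act2_le x)"
      unfolding s
    proof (rule Int_tel_subset_extent[OF admissible_act2_le QQ.top_mem])
      fix l w q1 q2 r1 r2 assume lw: "(l, w) \<in> tel GX (?M q) top" and q: "(q1, q2) \<in> l"
      have "(l, w) \<in> extent ?P"
        using M lw by blast
      then have "?P q1 q2 w"
        using q unfolding extent_def by blast
      then have "act2_le x q1 q2 (inf y w)"
        by (simp add: meet_restrict_def)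
      then show "act2_le x (inf q1 r1) (inf q2 r2) (inf w y)"
        by (rule act2_le_antimono[rotated 3]) (simp_all add: inf_commute)
    qed
  qed
  moreover have "extent (act2_le x) \<subseteq> c_lub GX ?S"
  proof (rule extent_subset_if_generators[OF GX.lub_mem[OF S]])
    fix q1 q2 w assume "act2_le x q1 q2 w"
    then have "qact (mul q1 q2) w \<le> x"
      by (simp add: act2_le_def qact_mul)
    then have "tel GX (?M (mul q1 q2)) top \<inter> tel GX UNIV w \<in> ?S"
      by blast
    then have sub: "tel GX (?M (mul q1 q2)) top \<inter> tel GX UNIV w \<subseteq> c_lub GX ?S"
      by (rule GX.lub_upper[OF S])
    have "(tel QQ q1 q2, w) \<in> tel GX (?M (mul q1 q2)) top"
      using QQ.tel_least[OF mul_le_mem_QQ, of q1 q2 "mul q1 q2"]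
      by (intro GX_down[OF GX.tel_mem GX_tel_self[OF mul_le_mem_QQ] QQ.tel_mem]) simp_all
    moreover have "(tel QQ q1 q2, w) \<in> tel GX UNIV w"
      by (rule GX_down[OF GX.tel_mem GX_tel_self[OF QQ.top_mem] QQ.tel_mem]) simp_all
    ultimately show "(tel QQ q1 q2, w) \<in> c_lub GX ?S"
      using sub by blast
  qed
  ultimately show ?thesis
    unfolding lhs by (rule subset_antisym)
qed

definition proj23 :: "'x \<Rightarrow> (('q \<times> 'q) set \<times> 'x) set" where
  "proj23 y = copair QX GX (\<lambda>q. tel GX (tel QQ top q) top) (\<lambda>y. tel GX UNIV y) (alpha_star ract xact qact y)"

lemma proj23_eq: "proj23 y = c_lub GX {tel GX (tel QQ top q) top \<inter> tel GX UNIV z | q z. qact q z \<le> y}"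
  unfolding proj23_def by (rule copair_alpha_star_GX) (rule GX.tel_mem)+

lemma proj23_mem: "proj23 y \<in> GX"
  unfolding proj23_eq by (intro GX.lub_mem Int_family_subset_GX GX.tel_mem)

lemma proj23_subset_extent:
  assumes qy: "qact q y \<le> x"
  shows "proj23 y \<subseteq> extent (meet_restrict (act2_le x) {(q, top, top)})"
  unfolding proj23_eq
proof (intro GX.lub_least Int_family_subset_GX GX.tel_mem extent_mem admissible_meet_restrict admissible_act2_le)
  fix s assume "s \<in> {tel GX (tel QQ top q') top \<inter> tel GX UNIV z | q' z. qact q' z \<le> y}"
  then obtain q' z where s: "s = tel GX (tel QQ top q') top \<inter> tel GX UNIV z" and qz: "qact q' z \<le> y"
    by blast
  let ?P = "meet_restrict (act2_le x) {(q, top, z)}"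
  have "act2_le x q q' z"
    using order_trans[OF qact_mono[OF order_refl qz] qy] by (simp add: act2_le_def)
  then have "tel QQ top q' \<subseteq> {(q1, q2). ?P q1 q2 top}"
    by (intro QQ.tel_least admissible_mem_QQ admissible_meet_restrict admissible_act2_le)
      (simp add: meet_restrict_def inf_commute)
  then have "(tel QQ top q', top) \<in> extent ?P"
    using QQ.tel_mem by (auto simp: extent_def)
  then have K: "tel GX (tel QQ top q') top \<subseteq> extent ?P"
    by (rule GX.tel_least[OF extent_mem[OF admissible_meet_restrict[OF admissible_act2_le]]])
  show "s \<subseteq> extent (meet_restrict (act2_le x) {(q, top, top)})"
    unfolding s
  proof (rule Int_tel_subset_extent[OF admissible_meet_restrict[OF admissible_act2_le] QQ.top_mem])
    fix l w q1 q2 r1 r2 assume lw: "(l, w) \<in> tel GX (tel QQ top q') top" and q12: "(q1, q2) \<in> l"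
    have "(l, w) \<in> extent ?P"
      using K lw by blast
    then have "?P q1 q2 w"
      using q12 unfolding extent_def by blast
    then have "act2_le x (inf q q1) q2 (inf z w)"
      by (simp add: meet_restrict_def)
    then have "act2_le x (inf q (inf q1 r1)) (inf q2 r2) (inf w z)"
      by (rule act2_le_antimono[rotated 3]) (simp_all add: le_infI2 inf_commute)
    then show "meet_restrict (act2_le x) {(q, top, top)} (inf q1 r1) (inf q2 r2) (inf w z)"
      by (simp add: meet_restrict_def)
  qed
qed

lemma act_then_act_eq_extent:
  "copair QX GX (\<lambda>q. tel GX (tel QQ q top) top) proj23 (alpha_star ract xact qact x) = extent (act2_le x)"
  (is "?lhs = _")
proof -
  let ?S = "{tel GX (tel QQ q top) top \<inter> proj23 y | q y. qact q y \<le> x}"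
  have S: "?S \<subseteq> GX"
    by (intro Int_family_subset_GX GX.tel_mem proj23_mem)
  have lhs: "?lhs = c_lub GX ?S"
    by (intro copair_alpha_star_GX GX.tel_mem proj23_mem)
  have "c_lub GX ?S \<subseteq> extent (act2_le x)"
  proof (rule GX.lub_least[OF S extent_mem[OF admissible_act2_le]])
    fix s assume "s \<in> ?S"
    then obtain q y where s: "s = tel GX (tel QQ q top) top \<inter> proj23 y" and qy: "qact q y \<le> x"
      by blast
    let ?C = "{(q1, q2, w) | q1 q2 w l. (l, w) \<in> proj23 y \<and> (q1, q2) \<in> l}"
    let ?P = "meet_restrict (act2_le x) ?C"
    have "?P q top top"
    proof (unfold meet_restrict_def, clarify)
      fix q1 q2 w l assume "(l, w) \<in> proj23 y" "(q1, q2) \<in> l"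
      then have "meet_restrict (act2_le x) {(q, top, top)} q1 q2 w"
        using proj23_subset_extent[OF qy] unfolding extent_def by blast
      then show "act2_le x (inf q1 q) (inf q2 top) (inf w top)"
        by (simp add: meet_restrict_def inf_commute)
    qed
    then have tel_sub: "tel QQ q top \<subseteq> {(r1, r2). ?P r1 r2 top}"
      by (intro QQ.tel_least admissible_mem_QQ admissible_meet_restrict admissible_act2_le) simp
    have "proj23 y \<inter> tel GX (tel QQ q top) top \<subseteq> extent (act2_le x)"
    proof (rule Int_tel_subset_extent[OF admissible_act2_le QQ.tel_mem])
      fix l w q1 q2 r1 r2
      assume "(l, w) \<in> proj23 y" "(q1, q2) \<in> l" and r12: "(r1, r2) \<in> tel QQ q top"
      then have "(q1, q2, w) \<in> ?C"
        by blast
      moreover have "?P r1 r2 top"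
        using tel_sub r12 by blast
      ultimately show "act2_le x (inf q1 r1) (inf q2 r2) (inf w top)"
        unfolding meet_restrict_def by fastforce
    qed
    then show "s \<subseteq> extent (act2_le x)"
      unfolding s by blast
  qed
  moreover have "extent (act2_le x) \<subseteq> c_lub GX ?S"
  proof (rule extent_subset_if_generators[OF GX.lub_mem[OF S]])
    fix q1 q2 w assume "act2_le x q1 q2 w"
    then have "tel GX (tel QQ q1 top) top \<inter> proj23 (qact q2 w) \<in> ?S"
      unfolding act2_le_def by blast
    then have sub: "tel GX (tel QQ q1 top) top \<inter> proj23 (qact q2 w) \<subseteq> c_lub GX ?S"
      by (rule GX.lub_upper[OF S])
    have "tel QQ q1 q2 \<subseteq> tel QQ q1 top"
      by (intro QQ.tel_least QQ.tel_mem QQ.mem_down[OF QQ.tel_mem QQ.tel_self]) simp_all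
    then have "(tel QQ q1 q2, w) \<in> tel GX (tel QQ q1 top) top"
      by (intro GX_down[OF GX.tel_mem GX_tel_self[OF QQ.tel_mem] QQ.tel_mem]) simp_all
    moreover have "(tel QQ q1 q2, w) \<in> proj23 (qact q2 w)"
    proof -
      let ?g = "tel GX (tel QQ top q2) top \<inter> tel GX UNIV w"
      have "tel QQ q1 q2 \<subseteq> tel QQ top q2"
        by (intro QQ.tel_least QQ.tel_mem QQ.mem_down[OF QQ.tel_mem QQ.tel_self]) simp_all
      then have "(tel QQ q1 q2, w) \<in> tel GX (tel QQ top q2) top"
        by (intro GX_down[OF GX.tel_mem GX_tel_self[OF QQ.tel_mem] QQ.tel_mem]) simp_all
      moreover have "(tel QQ q1 q2, w) \<in> tel GX UNIV w"
        by (rule GX_down[OF GX.tel_mem GX_tel_self[OF QQ.top_mem] QQ.tel_mem]) simp_all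
      moreover have "?g \<subseteq> proj23 (qact q2 w)"
        unfolding proj23_eq by (rule GX.lub_upper[OF Int_family_subset_GX[OF GX.tel_mem GX.tel_mem]]) blast
      ultimately show ?thesis
        by blast
    qed
    ultimately show "(tel QQ q1 q2, w) \<in> c_lub GX ?S"
      using sub by blast
  qed
  ultimately show ?thesis
    unfolding lhs by (rule subset_antisym)
qed

lemma action_assoc:
  "copair QX GX (\<lambda>q. inj1 GX QQ UNIV (mult_radj mul lact ract q)) (inj2 GX QQ UNIV)
       (alpha_star ract xact qact x) =
   copair QX GX (\<lambda>q. inj1 GX QQ UNIV (inj1 QQ UNIV UNIV q))
     (\<lambda>y. copair QX GX (\<lambda>q. inj1 GX QQ UNIV (inj2 QQ UNIV UNIV q)) (inj2 GX QQ UNIV)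
        (alpha_star ract xact qact y))
     (alpha_star ract xact qact x)"
proof -
  have "inj2 GX QQ UNIV = (\<lambda>y. tel GX UNIV y)"
    by (rule ext) (simp add: inj2_def QQ.top_eq)
  then show ?thesis
    by (simp add: inj1_def inj2_def mult_radj_eq proj23_def[symmetric] mult_then_act_eq_extent act_then_act_eq_extent)
qed

theorem fully_open_bundle:
  "fully_open_principal_G_bundle (\<lambda>a. lact a top) (\<lambda>a. ract top a) ups (mult_radj mul lact ract)
     (\<lambda>a. xact a top) (alpha_star ract xact qact) piS"
proof -
  have "frame_hom UNIV UNIV piS"
    using piS_open by (simp add: open_dimage_UNIV_iff)
  moreover have "alpha_star ract xact qact (xact b top) = inj1 QX UNIV UNIV (lact b top)" for b
    by (simp add: inj1_def alpha_star_xact_top)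
  moreover have "alpha_star ract xact qact (piS m) = inj2 QX UNIV UNIV (piS m)" for m
    by (simp add: inj2_def alpha_star_piS)
  ultimately show ?thesis
    unfolding fully_open_principal_G_bundle_def G_locale_def Let_def G1X_frame_eq G2_frame_eq G2X_frame_eq
    using X_frame M_frame anchor_frame_hom alpha_star_frame_hom action_assoc action_unit alpha_star_inj2_iso
      anchor_open_surjection bundle_open_surjection
    by simp
qed

end

theorem lemma5p3:
  fixes mul :: "'q::complete_lattice \<Rightarrow> 'q \<Rightarrow> 'q"
    and invo :: "'q \<Rightarrow> 'q"
    and lact :: "'a::complete_lattice \<Rightarrow> 'q \<Rightarrow> 'q"
    and ract :: "'q \<Rightarrow> 'a \<Rightarrow> 'q"
    and sigQ :: "'q \<Rightarrow> 'a"
    and ups :: "'q \<Rightarrow> 'a"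
    and qact :: "'q \<Rightarrow> 'x::complete_lattice \<Rightarrow> 'x"
    and xact :: "'a \<Rightarrow> 'x \<Rightarrow> 'x"
    and ip :: "'x \<Rightarrow> 'x \<Rightarrow> 'q"
    and sigX :: "'x \<Rightarrow> 'a"
    and piS :: "'m::complete_lattice \<Rightarrow> 'x"
    and sigt :: "'x \<Rightarrow> 'm"
  assumes "groupoid_quantale mul invo lact ract sigQ ups"
    and "principal_Q_locale mul invo lact ract sigQ ups qact xact ip sigX piS sigt"
  shows "fully_open_principal_G_bundle
           (\<lambda>a. lact a top) (\<lambda>a. ract top a) ups (mult_radj mul lact ract)
           (\<lambda>a. xact a top) (alpha_star ract xact qact) piS"
proof -
  interpret principal_Q_locale_laws mul invo lact ract sigQ ups qact xact ip sigX piS sigt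
    using assms by (rule principal_Q_locale_laws_if_principal_Q_locale)
  show ?thesis
    by (rule fully_open_bundle)
qed

end
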